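(* Let the setting be as described in the context. For each $N\in\mathcal N$ with $\mathcal E_N\cap\mathcal E_I\neq\emptyset$ let $\theta_N\in M_h$ be the unique element vanishing on $\mathcal E_I\setminus\mathcal E_N$ such that for every $K\in\mathcal T_N$: $b(\theta_N,\lambda_N\chi_K)=r(\lambda_N\chi_K)$ and $b(\theta_N,\lambda_M\chi_K)=0$ for every vertex $M\neq N$ of $K$ (and set $\theta_N=0$ if $\mathcal E_N\cap\mathcal E_I=\emptyset$). Let $(u_h,\theta_h)\in DG_h\times M_h$ be the solution of the mixed problem $\tilde a_h(u_h,w)+b(\theta_h,w)=l_h(w)$ for all $w\in DG_h$, $b(\mu,u_h)=0$ for all $\mu\in M_h$. Then $$\theta_h=\sum_{N\in\mathcal N}\theta_N .$$
   Context: Let $\Omega\subset\mathbb R^2$ be a bounded domain with Lipschitz, piecewise smooth boundary, $f\in L^2(\Omega)$, $g\in H^{1/2}(\partial\Omega)$. Let $\Omega_0\supset\Omega$ be a polygonal background domain with a shape-regular triangulation $\mathcal T_{0,h}$. Let $\Omega_h$ be a polygonal domain with $\Omega\subset\Omega_h\subset\Omega_0$ such that for each triangle $K$ with $K\cap\partial\Omega_h\neq\emptyset$, $\Gamma_K:=K\cap\partial\Omega_h$ is a line segment; $f$ is extended to $\Omega_h\setminus\Omega$ and $g_h$ is a given function on $\partial\Omega_h$. Active mesh $\mathcal T_h=\{K\in\mathcal T_{0,h}:K\cap\Omega_h\neq\emptyset\}$, $\triangle_h=\bigcup_{K\in\mathcal T_h}K$, $\mathcal T_h^b=\{K:K\cap\partial\Omega_h\neq\emptyset\}$,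 $h_K=\operatorname{diam}K$. $\mathcal E_I$: interior edges of $\mathcal T_h$, each with length $h_F$ and fixed unit normal $\boldsymbol n_F$; jump $[\![v]\!]=v^+-v^-$ and average $\{v\}=\frac12(v^++v^-)$, where $v^\pm(\boldsymbol x)=\lim_{s\to0^+}v(\boldsymbol x\mp s\boldsymbol n_F)$ and $K_F^\pm$ are the neighbours ($\boldsymbol n_F$ outward to $K_F^+$). $\mathcal E_g=\{F\in\mathcal E_I:(K_F^+\cup K_F^-)\cap\partial\Omega_h\neq\emptyset\}$. $\boldsymbol n_h$ outward unit normal of $\partial\Omega_h$, $\partial_{\boldsymbol n_h}=\boldsymbol n_h\cdot\nabla$, $\partial_{\boldsymbol n_F}=\boldsymbol n_F\cdot\nabla$. $\beta,\gamma>0$ constants, $\beta$ large enough that $a_h$ is coercive on $CG_h$. $a_h(w,v)=(\nabla w,\nabla v)_{\Omega_h}-\langle\partial_{\boldsymbol n_h}w,v\rangle_{\partial\Omega_h}-\langle w,\partial_{\boldsymbol n_h}v\rangle_{\partial\Omega_h}+\sum_{K\in\mathcal T_h^b}\frac{\beta}{h_K}\langle w,v\rangle_{\Gamma_K}+\gamma\sum_{F\in\mathcal E_g}h_F\langle[\![\partial_{\boldsymbol n_F}w]\!],[\![\partial_{\boldsymbol n_F}v]\!]\rangle_F$; $l_h(v)=(f,v)_{\Omega_h}-\langle g_h,\partial_{\boldsymbol n_h}v\rangle_{\partial\Omega_h}+\sum_{K\in\mathcal T_h^b}\frac{\beta}{h_K}\langle g_h,v\rangle_{\Gamma_K}$;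 $\tilde a_h(v,w)=a_h(v,w)-\sum_{F\in\mathcal E_I}\langle\{\partial_{\boldsymbol n_F}v\},[\![w]\!]\rangle_{F\cap\Omega_h}-\sum_{F\in\mathcal E_I}\langle\{\partial_{\boldsymbol n_F}w\},[\![v]\!]\rangle_{F\cap\Omega_h}$. $CG_h=\{v\in H^1(\triangle_h):v|_K\in\mathbb P_1(K)\}$, $DG_h=\{v\in L^2(\triangle_h):v|_K\in\mathbb P_1(K)\}$; $u_h$ (first component of the mixed solution) equals the CutFEM solution in $CG_h$. Residual: $r(w)=l_h(w)-\tilde a_h(u_h,w)$, $w\in DG_h$. $\mathcal N$: vertices of $\mathcal T_h$, $\mathcal N_I$: those not on $\partial\triangle_h$; $\mathcal T_N,\mathcal E_N$: elements/edges with vertex $N$; $\mathfrak s_N(F)=\pm1$ according as $\boldsymbol n_F$ is oriented counter-clockwise around $N$ or not. $\lambda_M$: hat function of vertex $M$; $\chi_K$: indicator of $K$. $M_h=\{\mu\in L^2(\mathcal E_I):\mu|_F\in\mathbb P_1(F),\ \sum_{F\in\mathcal E_N\cap\mathcal E_I}\mathfrak s_N(F)h_F\mu|_F(N)=0\ \forall N\in\mathcal N_I\}$, $b(\mu,v)=\sum_{F\in\mathcal E_I}\frac{h_F}{2}\sum_{M\text{ vertex of }F}\mu|_F(M)[\![v]\!](M)$. *)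

theory Defs
  imports "HOL-Analysis.Analysis"
begin

(* Points of the plane; triangles and edges are represented by their vertex sets. *)
type_synonym pt = "real^2"
type_synonym vset = "pt set"

definition affine_fun :: "(pt \<Rightarrow> real) \<Rightarrow> bool" where
  "affine_fun \<phi> \<longleftrightarrow> (\<exists>a c. \<phi> = (\<lambda>x. a \<bullet> x + c))"

definition grad :: "(pt \<Rightarrow> real) \<Rightarrow> pt" where
  "grad \<phi> = (THE a. \<exists>c. \<phi> = (\<lambda>x. a \<bullet> x + c))"

definition triangle :: "vset \<Rightarrow> bool" where
  "triangle K \<longleftrightarrow> card K = 3 \<and> \<not> collinear K"

(* finite conforming triangulation: any two distinct triangles meet in the
   convex hull of their common vertices (empty set, a common vertex, or a common edge) *)
definition conforming :: "vset set \<Rightarrow> bool" where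
  "conforming T \<longleftrightarrow> finite T \<and> (\<forall>K\<in>T. triangle K) \<and>
     (\<forall>K\<in>T. \<forall>K'\<in>T. K \<noteq> K' \<longrightarrow> convex hull K \<inter> convex hull K' = convex hull (K \<inter> K'))"

definition nodes :: "vset set \<Rightarrow> pt set" where
  "nodes T = \<Union>T"

definition mesh_dom :: "vset set \<Rightarrow> pt set" where
  "mesh_dom T = (\<Union>K\<in>T. convex hull K)"

definition interior_nodes :: "vset set \<Rightarrow> pt set" where
  "interior_nodes T = {N \<in> nodes T. N \<notin> frontier (mesh_dom T)}"

definition interior_edges :: "vset set \<Rightarrow> vset set" where
  "interior_edges T = {F. card F = 2 \<and> (\<exists>K\<in>T. \<exists>K'\<in>T. K \<noteq> K' \<and> F \<subseteq> K \<and> F \<subseteq> K')}"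

(* K_F^- : the neighbour of F other than K_F^+ = Kp F *)
definition Km :: "vset set \<Rightarrow> (vset \<Rightarrow> vset) \<Rightarrow> vset \<Rightarrow> vset" where
  "Km T Kp F = (THE K. K \<in> T \<and> F \<subseteq> K \<and> K \<noteq> Kp F)"

definition nF :: "(vset \<Rightarrow> vset) \<Rightarrow> vset \<Rightarrow> pt" where
  "nF Kp F = (THE n. norm n = 1 \<and> (\<forall>x\<in>F. \<forall>y\<in>F. n \<bullet> (x - y) = 0) \<and>
                     (\<forall>x\<in>F. \<forall>z\<in>Kp F - F. n \<bullet> (z - x) < 0))"

(* \<s>_N(F) = 1 iff n_F is oriented counter-clockwise around the vertex N of F *)
definition sgn_ccw :: "(vset \<Rightarrow> vset) \<Rightarrow> pt \<Rightarrow> vset \<Rightarrow> real" where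
  "sgn_ccw Kp N F = (let M = the_elem (F - {N}); d = M - N; n = nF Kp F in
       if d $ 1 * n $ 2 - d $ 2 * n $ 1 > 0 then 1 else -1)"

(* a DG function assigns to each triangle K of T an affine function (its restriction to K) *)
definition DG :: "vset set \<Rightarrow> (vset \<Rightarrow> pt \<Rightarrow> real) set" where
  "DG T = {v. (\<forall>K\<in>T. affine_fun (v K)) \<and> (\<forall>K. K \<notin> T \<longrightarrow> v K = (\<lambda>_. 0))}"

definition CG :: "vset set \<Rightarrow> (vset \<Rightarrow> pt \<Rightarrow> real) set" where
  "CG T = {v \<in> DG T. \<forall>K\<in>T. \<forall>K'\<in>T. \<forall>x \<in> convex hull K \<inter> convex hull K'. v K x = v K' x}"

definition jump :: "vset set \<Rightarrow> (vset \<Rightarrow> vset) \<Rightarrow> (vset \<Rightarrow> pt \<Rightarrow> real) \<Rightarrow> vset \<Rightarrow> pt \<Rightarrow> real" where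
  "jump T Kp v F x = v (Kp F) x - v (Km T Kp F) x"

definition dn_jump :: "vset set \<Rightarrow> (vset \<Rightarrow> vset) \<Rightarrow> (vset \<Rightarrow> pt \<Rightarrow> real) \<Rightarrow> vset \<Rightarrow> real" where
  "dn_jump T Kp v F = nF Kp F \<bullet> grad (v (Kp F)) - nF Kp F \<bullet> grad (v (Km T Kp F))"

definition dn_avg :: "vset set \<Rightarrow> (vset \<Rightarrow> vset) \<Rightarrow> (vset \<Rightarrow> pt \<Rightarrow> real) \<Rightarrow> vset \<Rightarrow> real" where
  "dn_avg T Kp v F = (nF Kp F \<bullet> grad (v (Kp F)) + nF Kp F \<bullet> grad (v (Km T Kp F))) / 2"

(* multipliers: \<mu> F M is the value at the vertex M of F of the P1 function \<mu>|_F
   (zero junk outside interior edges / vertices) *)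
definition Mh :: "vset set \<Rightarrow> (vset \<Rightarrow> vset) \<Rightarrow> (vset \<Rightarrow> pt \<Rightarrow> real) set" where
  "Mh T Kp = {\<mu>. (\<forall>F M. (F \<notin> interior_edges T \<or> M \<notin> F) \<longrightarrow> \<mu> F M = 0) \<and>
      (\<forall>N \<in> interior_nodes T.
          (\<Sum>F \<in> {F \<in> interior_edges T. N \<in> F}. sgn_ccw Kp N F * diameter F * \<mu> F N) = 0)}"

definition bform :: "vset set \<Rightarrow> (vset \<Rightarrow> vset) \<Rightarrow> (vset \<Rightarrow> pt \<Rightarrow> real) \<Rightarrow> (vset \<Rightarrow> pt \<Rightarrow> real) \<Rightarrow> real" where
  "bform T Kp \<mu> v = (\<Sum>F \<in> interior_edges T. diameter F / 2 * (\<Sum>M\<in>F. \<mu> F M * jump T Kp v F M))"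

definition hat :: "vset \<Rightarrow> pt \<Rightarrow> (pt \<Rightarrow> real)" where
  "hat K M = (THE \<phi>. affine_fun \<phi> \<and> \<phi> M = 1 \<and> (\<forall>M' \<in> K - {M}. \<phi> M' = 0))"

definition hatchi :: "vset \<Rightarrow> pt \<Rightarrow> (vset \<Rightarrow> pt \<Rightarrow> real)" where
  "hatchi K M = (\<lambda>K'. if K' = K then hat K M else (\<lambda>_. 0))"

definition seg_int :: "pt \<Rightarrow> pt \<Rightarrow> (pt \<Rightarrow> real) \<Rightarrow> real" where
  "seg_int p q \<phi> = dist p q * integral {0..1} (\<lambda>t. \<phi> (p + t *\<^sub>R (q - p)))"

definition edge_int :: "vset \<Rightarrow> (pt \<Rightarrow> real) \<Rightarrow> real" where
  "edge_int F \<phi> = (SOME r. \<exists>p q. F = {p, q} \<and> r = seg_int p q \<phi>)"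

definition Tb :: "vset set \<Rightarrow> pt set \<Rightarrow> vset set" where
  "Tb T \<Omega>h = {K \<in> T. convex hull K \<inter> frontier \<Omega>h \<noteq> {}}"

definition Eg :: "vset set \<Rightarrow> (vset \<Rightarrow> vset) \<Rightarrow> pt set \<Rightarrow> vset set" where
  "Eg T Kp \<Omega>h = {F \<in> interior_edges T. Kp F \<in> Tb T \<Omega>h \<or> Km T Kp F \<in> Tb T \<Omega>h}"

(* \<Gamma> K = (p, q) gives the segment \<Gamma>_K = [p,q]; nh K is n_h on \<Gamma>_K *)
definition a_h :: "vset set \<Rightarrow> (vset \<Rightarrow> vset) \<Rightarrow> pt set \<Rightarrow> (vset \<Rightarrow> pt \<times> pt) \<Rightarrow> (vset \<Rightarrow> pt)
     \<Rightarrow> real \<Rightarrow> real \<Rightarrow> (vset \<Rightarrow> pt \<Rightarrow> real) \<Rightarrow> (vset \<Rightarrow> pt \<Rightarrow> real) \<Rightarrow> real" where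
  "a_h T Kp \<Omega>h \<Gamma> nh \<beta> \<gamma> w v =
     (\<Sum>K\<in>T. integral (convex hull K \<inter> \<Omega>h) (\<lambda>x. grad (w K) \<bullet> grad (v K)))
   - (\<Sum>K\<in>Tb T \<Omega>h. seg_int (fst (\<Gamma> K)) (snd (\<Gamma> K)) (\<lambda>x. (nh K \<bullet> grad (w K)) * v K x))
   - (\<Sum>K\<in>Tb T \<Omega>h. seg_int (fst (\<Gamma> K)) (snd (\<Gamma> K)) (\<lambda>x. w K x * (nh K \<bullet> grad (v K))))
   + (\<Sum>K\<in>Tb T \<Omega>h. \<beta> / diameter (convex hull K) *
         seg_int (fst (\<Gamma> K)) (snd (\<Gamma> K)) (\<lambda>x. w K x * v K x))
   + \<gamma> * (\<Sum>F\<in>Eg T Kp \<Omega>h. diameter F * edge_int F (\<lambda>x. dn_jump T Kp w F * dn_jump T Kp v F))"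

definition l_h :: "vset set \<Rightarrow> pt set \<Rightarrow> (vset \<Rightarrow> pt \<times> pt) \<Rightarrow> (vset \<Rightarrow> pt)
     \<Rightarrow> real \<Rightarrow> (pt \<Rightarrow> real) \<Rightarrow> (pt \<Rightarrow> real) \<Rightarrow> (vset \<Rightarrow> pt \<Rightarrow> real) \<Rightarrow> real" where
  "l_h T \<Omega>h \<Gamma> nh \<beta> f g v =
     (\<Sum>K\<in>T. integral (convex hull K \<inter> \<Omega>h) (\<lambda>x. f x * v K x))
   - (\<Sum>K\<in>Tb T \<Omega>h. seg_int (fst (\<Gamma> K)) (snd (\<Gamma> K)) (\<lambda>x. g x * (nh K \<bullet> grad (v K))))
   + (\<Sum>K\<in>Tb T \<Omega>h. \<beta> / diameter (convex hull K) *
         seg_int (fst (\<Gamma> K)) (snd (\<Gamma> K)) (\<lambda>x. g x * v K x))"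

definition at_h :: "vset set \<Rightarrow> (vset \<Rightarrow> vset) \<Rightarrow> pt set \<Rightarrow> (vset \<Rightarrow> pt \<times> pt) \<Rightarrow> (vset \<Rightarrow> pt)
     \<Rightarrow> real \<Rightarrow> real \<Rightarrow> (vset \<Rightarrow> pt \<Rightarrow> real) \<Rightarrow> (vset \<Rightarrow> pt \<Rightarrow> real) \<Rightarrow> real" where
  "at_h T Kp \<Omega>h \<Gamma> nh \<beta> \<gamma> v w =
     a_h T Kp \<Omega>h \<Gamma> nh \<beta> \<gamma> v w
   - (\<Sum>F\<in>interior_edges T. edge_int F (\<lambda>x. indicator \<Omega>h x * dn_avg T Kp v F * jump T Kp w F x))
   - (\<Sum>F\<in>interior_edges T. edge_int F (\<lambda>x. indicator \<Omega>h x * dn_avg T Kp w F * jump T Kp v F x))"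

definition polygonal :: "pt set \<Rightarrow> bool" where
  "polygonal S \<longleftrightarrow> (\<exists>P. finite P \<and> frontier S = (\<Union>(p,q)\<in>P. closed_segment p q))"

end

theory Submission
  imports Defs
begin

text \<open>Let \<open>D = \<theta>\<^sub>h - \<Sum>\<^sub>N \<theta>\<^sub>N\<close>. It lies in \<open>M\<^sub>h\<close>, and \<open>b(D, \<lambda>\<^sub>M \<chi>\<^sub>K) = 0\<close> for every triangle \<open>K\<close>
  and vertex \<open>M\<close> of \<open>K\<close>: the first mixed equation gives \<open>b(\<theta>\<^sub>h, \<lambda>\<^sub>M \<chi>\<^sub>K) = r(\<lambda>\<^sub>M \<chi>\<^sub>K)\<close>, and
  among the local multipliers only \<open>\<theta>\<^sub>M\<close> sees \<open>\<lambda>\<^sub>M \<chi>\<^sub>K\<close>, with the same value.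

  Such a \<open>D\<close> vanishes. Fix a vertex \<open>N\<close> and put \<open>y\<^sub>F = s\<^sub>N(F) h\<^sub>F D\<^sub>F(N)\<close> for the interior edges
  \<open>F\<close> at \<open>N\<close>. In a triangle at \<open>N\<close>, the equation for \<open>\<lambda>\<^sub>N \<chi>\<^sub>K\<close> says that the two edges of \<open>K\<close> at
  \<open>N\<close> carry the same \<open>y\<close>, or that \<open>y = 0\<close> if one of them lies on \<open>\<partial>\<triangle>\<^sub>h\<close>; this uses that
  the two triangles at an interior edge lie on opposite sides of it. If some \<open>y\<^sub>F = c \<noteq> 0\<close>, the
  triangles reached from \<open>F\<close> across edges through \<open>N\<close> therefore have no boundary edge at \<open>N\<close>,
  and by connectedness of a punctured disc they cover a neighbourhood of \<open>N\<close>. So \<open>N\<close> is an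
  interior vertex and every edge at \<open>N\<close> carries \<open>c\<close>, contradicting the condition
  \<open>\<Sum>\<^sub>F y\<^sub>F = 0\<close> in the definition of \<open>M\<^sub>h\<close>.\<close>

section \<open>Planar vectors\<close>

definition cross2 :: "pt \<Rightarrow> pt \<Rightarrow> real" where
  "cross2 u v = u$1 * v$2 - u$2 * v$1"

definition rot90 :: "pt \<Rightarrow> pt" where
  "rot90 d = (\<chi> i. if i = 1 then - d$2 else d$1)"

lemma inner_pt: "(u::pt) \<bullet> v = u$1 * v$1 + u$2 * v$2"
  by (simp add: inner_vec_def sum_2)

lemma pt_eq_iff: "(u::pt) = v \<longleftrightarrow> u$1 = v$1 \<and> u$2 = v$2"
  by (simp add: vec_eq_iff forall_2)

lemma rot90_nth [simp]: "rot90 d $ 1 = - d$2" "rot90 d $ 2 = d$1"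
  by (simp_all add: rot90_def)

lemma cross2_eq_inner_rot90: "cross2 d v = rot90 d \<bullet> v"
  by (simp add: cross2_def inner_pt)

lemma inner_rot90_self: "rot90 d \<bullet> d = 0"
  by (simp add: inner_pt)

lemma norm_rot90: "norm (rot90 d) = norm d"
  by (simp add: norm_eq_sqrt_inner inner_pt algebra_simps)

lemma cross2_rot90_self: "cross2 d (rot90 d) = d \<bullet> d"
  by (simp add: cross2_def inner_pt)

lemma cross2_scaleR_right: "cross2 u (k *\<^sub>R v) = k * cross2 u v"
  by (simp add: cross2_def algebra_simps)

lemma cross2_swap: "cross2 v u = - cross2 u v"
  by (simp add: cross2_def)

lemma lagrange_identity_pt: "(u \<bullet> u) *\<^sub>R v - (u \<bullet> v) *\<^sub>R u = cross2 u v *\<^sub>R rot90 u"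
  by (simp add: pt_eq_iff inner_pt cross2_def algebra_simps)

lemma perpendicular_eq_rot90:
  assumes "n \<bullet> d = 0" "d \<noteq> 0"
  shows "n = (cross2 d n / (d \<bullet> d)) *\<^sub>R rot90 d"
proof -
  have "(d \<bullet> d) *\<^sub>R n = cross2 d n *\<^sub>R rot90 d"
    using lagrange_identity_pt[of d n] assms(1) by (simp add: inner_commute)
  moreover have "n = (1 / (d \<bullet> d)) *\<^sub>R ((d \<bullet> d) *\<^sub>R n)"
    using assms(2) by simp
  ultimately show ?thesis by simp
qed

lemma cross2_neq_0_if_noncollinear:
  assumes "\<not> collinear {P, Q, R}"
  shows "cross2 (Q - P) (R - P) \<noteq> 0"
proof
  assume cross: "cross2 (Q - P) (R - P) = 0"
  define u where "u = Q - P"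
  define v where "v = R - P"
  have "collinear {0, u, v}"
  proof (cases "u = 0")
    case False
    have "(u \<bullet> u) *\<^sub>R v = (u \<bullet> v) *\<^sub>R u"
      using lagrange_identity_pt[of u v] cross by (simp add: u_def v_def)
    moreover have "v = (1 / (u \<bullet> u)) *\<^sub>R ((u \<bullet> u) *\<^sub>R v)"
      using False by simp
    ultimately have "v = ((u \<bullet> v) / (u \<bullet> u)) *\<^sub>R u" by simp
    then show ?thesis by (auto simp: collinear_lemma)
  qed (simp add: collinear_lemma)
  then have "collinear {Q, P, R}"
    using collinear_3[of Q P R] by (simp add: u_def v_def)
  then show False using assms by (simp add: insert_commute)
qed

lemma noncollinear_distinct:
  assumes "\<not> collinear {P, Q, R::pt}"
  shows "P \<noteq> Q" "P \<noteq> R" "Q \<noteq> R"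
  using assms collinear_2 by (auto simp: insert_commute)

section \<open>Affine functions\<close>

lemma affine_fun_iff: "affine_fun \<phi> \<longleftrightarrow> (\<exists>a c. \<forall>x. \<phi> x = a \<bullet> x + c)"
  unfolding affine_fun_def by (auto simp: fun_eq_iff)

lemma affine_fun_add: "affine_fun f \<Longrightarrow> affine_fun g \<Longrightarrow> affine_fun (\<lambda>x. f x + g x)"
proof -
  assume "affine_fun f" "affine_fun g"
  then obtain a b c d where "f = (\<lambda>x. a \<bullet> x + c)" "g = (\<lambda>x. b \<bullet> x + d)"
    unfolding affine_fun_def by blast
  then have "(\<lambda>x. f x + g x) = (\<lambda>x. (a + b) \<bullet> x + (c + d))" by (simp add: inner_add_left algebra_simps)
  then show ?thesis unfolding affine_fun_def by blast
qed

lemma affine_fun_mult: "affine_fun f \<Longrightarrow> affine_fun (\<lambda>x. k * f x)"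
proof -
  assume "affine_fun f"
  then obtain a c where "f = (\<lambda>x. a \<bullet> x + c)" unfolding affine_fun_def by blast
  then have "(\<lambda>x. k * f x) = (\<lambda>x. (k *\<^sub>R a) \<bullet> x + k * c)" by (simp add: distrib_left)
  then show ?thesis unfolding affine_fun_def by blast
qed

lemma affine_fun_const: "affine_fun (\<lambda>x. k)"
  unfolding affine_fun_iff by (rule exI[of _ 0]) simp

lemma affine_fun_component: "affine_fun (\<lambda>x::pt. x$i)"
proof -
  have "(\<lambda>x::pt. x$i) = (\<lambda>x. axis i 1 \<bullet> x + 0)" by (simp add: inner_axis')
  then show ?thesis unfolding affine_fun_def by blast
qed

lemma affine_fun_diff: "affine_fun f \<Longrightarrow> affine_fun g \<Longrightarrow> affine_fun (\<lambda>x. f x - g x)"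
  using affine_fun_add[of f "\<lambda>x. (-1) * g x"] affine_fun_mult[of g "-1"] by simp

lemma affine_fun_combination:
  assumes "affine_fun \<phi>" "u + v + w = 1"
  shows "\<phi> (u *\<^sub>R a + v *\<^sub>R b + w *\<^sub>R c) = u * \<phi> a + v * \<phi> b + w * \<phi> c"
proof -
  obtain p q where \<phi>: "\<And>x. \<phi> x = p \<bullet> x + q" using assms(1) unfolding affine_fun_iff by blast
  have "q = u * q + v * q + w * q" using assms(2) by (metis distrib_right mult_1)
  then show ?thesis unfolding \<phi> by (simp add: inner_add_right algebra_simps)
qed

lemma open_affine_fun_pos: "affine_fun \<phi> \<Longrightarrow> open {x. \<phi> x > 0}"
proof -
  assume "affine_fun \<phi>"
  then obtain a c where "\<phi> = (\<lambda>x. a \<bullet> x + c)" unfolding affine_fun_def by blast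
  then have "{x. \<phi> x > 0} = {x. a \<bullet> x > - c}" by auto
  then show ?thesis using open_halfspace_gt by simp
qed

lemma affine_fun_eq_0_if_noncollinear_zeros:
  assumes "affine_fun \<phi>" "\<not> collinear {N, A, B}" "\<phi> N = 0" "\<phi> A = 0" "\<phi> B = 0"
  shows "\<phi> x = 0"
proof -
  obtain p q where \<phi>: "\<And>x. \<phi> x = p \<bullet> x + q" using assms(1) unfolding affine_fun_iff by blast
  define u where "u = A - N"
  define v where "v = B - N"
  have "p \<bullet> u = 0" "p \<bullet> v = 0"
    using assms \<phi> by (simp_all add: u_def v_def inner_diff_right)
  then have pu: "p$1 * u$1 + p$2 * u$2 = 0" and pv: "p$1 * v$1 + p$2 * v$2 = 0"
    by (simp_all add: inner_pt)
  have det: "u$1 * v$2 - u$2 * v$1 \<noteq> 0"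
    using cross2_neq_0_if_noncollinear[OF assms(2)] by (simp add: cross2_def u_def v_def)
  have "p$1 * (u$1 * v$2 - u$2 * v$1) = 0" "p$2 * (u$1 * v$2 - u$2 * v$1) = 0"
    using pu pv by algebra+
  then have "p = 0" using det by (simp add: pt_eq_iff)
  then show ?thesis using \<phi> assms(3) by simp
qed

section \<open>Barycentric coordinates\<close>

lemma triangle_if_noncollinear: "\<not> collinear {N, A, B} \<Longrightarrow> triangle {N, A, B}"
  unfolding triangle_def using noncollinear_distinct[of N A B] by auto

lemma triangle_finite: "triangle K \<Longrightarrow> finite K"
  unfolding triangle_def by (auto intro: card_ge_0_finite)

lemma triangle_obtain_vertices:
  assumes "triangle K" "N \<in> K"
  obtains A B where "K = {N, A, B}" "\<not> collinear {N, A, B}"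
proof -
  obtain x y z where K: "K = {x, y, z}" using assms(1) unfolding triangle_def card_3_iff by blast
  then have "K = {N, y, z} \<or> K = {N, x, z} \<or> K = {N, x, y}" using assms(2) by auto
  then show ?thesis using that assms(1) unfolding triangle_def by blast
qed

lemma triangle_obtain_opposite_vertex:
  assumes "triangle K" "P \<in> K" "Q \<in> K" "P \<noteq> Q"
  obtains C where "K = {P, Q, C}" "\<not> collinear {P, Q, C}"
proof -
  obtain A B where K: "K = {P, A, B}" and nc: "\<not> collinear {P, A, B}"
    using triangle_obtain_vertices[OF assms(1,2)] .
  then have "K = {P, Q, B} \<and> \<not> collinear {P, Q, B} \<or> K = {P, Q, A} \<and> \<not> collinear {P, Q, A}"
    using assms(3,4) by (auto simp: insert_commute)
  then show ?thesis using that by blast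
qed

lemma affine_fun_cross2: "affine_fun (\<lambda>x. cross2 u (x - P) / c)"
proof -
  have "(\<lambda>x. cross2 u (x - P) / c) = (\<lambda>x. (rot90 u /\<^sub>R c) \<bullet> x + (- (rot90 u \<bullet> P) / c))"
    by (simp add: cross2_eq_inner_rot90 inner_diff_right diff_divide_distrib divide_inverse_commute right_diff_distrib)
  then show ?thesis unfolding affine_fun_def by blast
qed

lemma hat_eq_cross2:
  assumes nc: "\<not> collinear {N, A, B}"
  shows "hat {N, A, B} B = (\<lambda>x. cross2 (A - N) (x - N) / cross2 (A - N) (B - N))"
    (is "_ = ?\<phi>")
  unfolding hat_def
proof (rule the_equality)
  have c: "cross2 (A - N) (B - N) \<noteq> 0" using cross2_neq_0_if_noncollinear[OF nc] .
  have affine: "affine_fun ?\<phi>" by (rule affine_fun_cross2)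
  have "N \<noteq> B" "A \<noteq> B" using noncollinear_distinct[OF nc] by auto
  then show "affine_fun ?\<phi> \<and> ?\<phi> B = 1 \<and> (\<forall>M'\<in>{N, A, B} - {B}. ?\<phi> M' = 0)"
    using affine c by (auto simp: cross2_def)
  fix \<psi> assume \<psi>: "affine_fun \<psi> \<and> \<psi> B = 1 \<and> (\<forall>M'\<in>{N, A, B} - {B}. \<psi> M' = 0)"
  have "\<psi> x - ?\<phi> x = 0" for x
    by (rule affine_fun_eq_0_if_noncollinear_zeros[OF affine_fun_diff nc])
      (use \<psi> affine c \<open>N \<noteq> B\<close> \<open>A \<noteq> B\<close> in \<open>auto simp: cross2_def\<close>)
  then show "\<psi> = ?\<phi>" by auto
qed

lemma
  assumes "triangle K" "M \<in> K"
  shows affine_fun_hat: "affine_fun (hat K M)"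
    and hat_self: "hat K M M = 1"
    and hat_other_vertex: "\<And>M'. M' \<in> K \<Longrightarrow> M' \<noteq> M \<Longrightarrow> hat K M M' = 0"
proof -
  obtain A B where K: "K = {M, A, B}" and nc: "\<not> collinear {M, A, B}"
    using triangle_obtain_vertices[OF assms] .
  have nc': "\<not> collinear {A, B, M}" and K': "K = {A, B, M}"
    using nc K by (simp_all add: insert_commute)
  have hat: "hat K M = (\<lambda>x. cross2 (B - A) (x - A) / cross2 (B - A) (M - A))"
    unfolding K' by (rule hat_eq_cross2[OF nc'])
  have "cross2 (B - A) (M - A) \<noteq> 0" using cross2_neq_0_if_noncollinear[OF nc'] .
  then show "hat K M M = 1" "\<And>M'. M' \<in> K \<Longrightarrow> M' \<noteq> M \<Longrightarrow> hat K M M' = 0"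
    unfolding hat using K by (auto simp: cross2_def)
  show "affine_fun (hat K M)" unfolding hat by (rule affine_fun_cross2)
qed

lemma hat_sum:
  assumes nc: "\<not> collinear {N, A, B}" and K: "K = {N, A, B}"
  shows "hat K N x + hat K A x + hat K B x = 1"
proof -
  have t: "triangle K" using triangle_if_noncollinear[OF nc] K by simp
  have "N \<noteq> A" "N \<noteq> B" "A \<noteq> B" using noncollinear_distinct[OF nc] by auto
  note hat_vertices = K this affine_fun_hat[OF t] hat_self[OF t] hat_other_vertex[OF t]
  have "hat K N x + hat K A x + hat K B x - 1 = 0"
    by (rule affine_fun_eq_0_if_noncollinear_zeros[OF _ nc])
      (use hat_vertices in \<open>auto intro!: affine_fun_diff affine_fun_add affine_fun_const\<close>)
  then show ?thesis by simp
qed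

lemma barycentric_decomposition:
  assumes nc: "\<not> collinear {N, A, B}" and K: "K = {N, A, B}"
  shows "x = hat K N x *\<^sub>R N + hat K A x *\<^sub>R A + hat K B x *\<^sub>R B"
proof -
  have t: "triangle K" using triangle_if_noncollinear[OF nc] K by simp
  have "N \<noteq> A" "N \<noteq> B" "A \<noteq> B" using noncollinear_distinct[OF nc] by auto
  note hat_vertices = K this affine_fun_hat[OF t] hat_self[OF t] hat_other_vertex[OF t]
  have "N$i * hat K N x + A$i * hat K A x + B$i * hat K B x - x$i = 0" for i
    by (rule affine_fun_eq_0_if_noncollinear_zeros[OF _ nc])
      (use hat_vertices in \<open>auto intro!: affine_fun_diff affine_fun_add affine_fun_mult affine_fun_component\<close>)
  then show ?thesis by (simp add: vec_eq_iff algebra_simps)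
qed

lemma hat_convex_combination:
  assumes nc: "\<not> collinear {N, A, B}" and K: "K = {N, A, B}" and "u + v + w = 1"
  shows "hat K N (u *\<^sub>R N + v *\<^sub>R A + w *\<^sub>R B) = u"
proof -
  have t: "triangle K" using triangle_if_noncollinear[OF nc] K by simp
  have "N \<noteq> A" "N \<noteq> B" using noncollinear_distinct[OF nc] by auto
  then show ?thesis
    using affine_fun_combination[OF affine_fun_hat[OF t] assms(3)] hat_self[OF t] hat_other_vertex[OF t] K
    by simp
qed

lemma convex_hull_triangle_iff_hat_nonneg:
  assumes nc: "\<not> collinear {N, A, B}" and K: "K = {N, A, B}"
  shows "x \<in> convex hull K \<longleftrightarrow> 0 \<le> hat K N x \<and> 0 \<le> hat K A x \<and> 0 \<le> hat K B x"
proof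
  assume "x \<in> convex hull K"
  then obtain u v w where x: "x = u *\<^sub>R N + v *\<^sub>R A + w *\<^sub>R B"
    and uvw: "0 \<le> u" "0 \<le> v" "0 \<le> w" "u + v + w = 1"
    unfolding K convex_hull_3 by blast
  have ncA: "\<not> collinear {A, B, N}" "K = {A, B, N}" and ncB: "\<not> collinear {B, N, A}" "K = {B, N, A}"
    using nc K by (simp_all add: insert_commute)
  have "hat K N x = u" using hat_convex_combination[OF nc K uvw(4)] x by simp
  moreover have "hat K A x = v"
    using hat_convex_combination[OF ncA, of v w u] uvw(4) unfolding x by (simp add: algebra_simps)
  moreover have "hat K B x = w"
    using hat_convex_combination[OF ncB, of w u v] uvw(4) unfolding x by (simp add: algebra_simps)
  ultimately show "0 \<le> hat K N x \<and> 0 \<le> hat K A x \<and> 0 \<le> hat K B x" using uvw by simp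
next
  assume "0 \<le> hat K N x \<and> 0 \<le> hat K A x \<and> 0 \<le> hat K B x"
  then show "x \<in> convex hull K"
    using hat_sum[OF nc K, of x] barycentric_decomposition[OF nc K, of x]
    unfolding K convex_hull_3 by blast
qed

lemma interior_convex_hull_if_hat_pos:
  assumes nc: "\<not> collinear {N, A, B}" and K: "K = {N, A, B}"
    and pos: "hat K N x > 0" "hat K A x > 0" "hat K B x > 0"
  shows "x \<in> interior (convex hull K)"
proof (rule interiorI)
  have t: "triangle K" using triangle_if_noncollinear[OF nc] K by simp
  let ?W = "{z. hat K N z > 0} \<inter> {z. hat K A z > 0} \<inter> {z. hat K B z > 0}"
  show "open ?W" using K by (intro open_Int open_affine_fun_pos affine_fun_hat[OF t]) auto
  show "x \<in> ?W" using pos by simp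
  show "?W \<subseteq> convex hull K"
  proof
    fix z assume "z \<in> ?W"
    then have "0 \<le> hat K N z \<and> 0 \<le> hat K A z \<and> 0 \<le> hat K B z" by auto
    then show "z \<in> convex hull K" using convex_hull_triangle_iff_hat_nonneg[OF nc K] by blast
  qed
qed

text \<open>Both sides are affine in \<open>x\<close> and vanish on the line through \<open>N\<close> and \<open>B\<close>.\<close>

lemma hat_adjacent_triangle:
  assumes nc: "\<not> collinear {N, B, A}" and nc': "\<not> collinear {N, B, E}"
  shows "hat {N, B, E} E x = hat {N, B, E} E A * hat {N, B, A} A x"
proof -
  have t: "triangle {N, B, A}" "triangle {N, B, E}"
    using triangle_if_noncollinear nc nc' by auto
  have "N \<noteq> B" "N \<noteq> A" "B \<noteq> A" "N \<noteq> E" "B \<noteq> E"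
    using noncollinear_distinct[OF nc] noncollinear_distinct[OF nc'] by auto
  note hat_vertices = this affine_fun_hat[OF t(1), of A] hat_self[OF t(1), of A] hat_other_vertex[OF t(1), of A]
      affine_fun_hat[OF t(2), of E] hat_self[OF t(2), of E] hat_other_vertex[OF t(2), of E]
  have "hat {N, B, E} E x - hat {N, B, E} E A * hat {N, B, A} A x = 0"
    by (rule affine_fun_eq_0_if_noncollinear_zeros[OF _ nc])
      (use hat_vertices in \<open>auto intro!: affine_fun_diff affine_fun_mult\<close>)
  then show ?thesis by simp
qed

lemma hat_pos_near_vertex:
  assumes "finite C" "\<And>K. K \<in> C \<Longrightarrow> triangle K \<and> N \<in> K"
  obtains r where "r > 0" "\<And>K x. K \<in> C \<Longrightarrow> x \<in> ball N r \<Longrightarrow> hat K N x > 0"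
proof -
  let ?W = "\<Inter>K\<in>C. {x. hat K N x > 0}"
  have "open ?W"
    using assms by (intro open_INT ballI open_affine_fun_pos affine_fun_hat) auto
  moreover have "N \<in> ?W" using assms hat_self by auto
  ultimately obtain r where "r > 0" "ball N r \<subseteq> ?W" using open_contains_ball by blast
  then show ?thesis using that by blast
qed

lemma triangle_meets_punctured_ball:
  assumes "triangle K" "N \<in> K" "r > 0"
  obtains p where "p \<in> convex hull K" "p \<in> ball N r" "p \<noteq> N"
proof -
  obtain A B where K: "K = {N, A, B}" and nc: "\<not> collinear {N, A, B}"
    using triangle_obtain_vertices[OF assms(1,2)] .
  have "A \<noteq> N" using noncollinear_distinct[OF nc] by auto
  then have nA: "norm (A - N) > 0" by simp
  define s where "s = min (1/2) (r / (2 * norm (A - N)))"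
  have s: "0 < s" "s \<le> 1" using nA assms(3) by (simp_all add: s_def)
  have "s * norm (A - N) \<le> r / (2 * norm (A - N)) * norm (A - N)"
    by (rule mult_right_mono) (simp_all add: s_def)
  then have close: "s * norm (A - N) < r" using nA assms(3) by simp
  define p where "p = (1 - s) *\<^sub>R N + s *\<^sub>R A + 0 *\<^sub>R B"
  have "p \<in> convex hull K"
    unfolding K convex_hull_3 p_def using s
    by (intro CollectI exI[of _ "1 - s"] exI[of _ s] exI[of _ 0]) auto
  moreover have pN: "p - N = s *\<^sub>R (A - N)" by (simp add: p_def algebra_simps)
  have "dist N p = norm (p - N)" by (simp add: dist_norm norm_minus_commute)
  then have "dist N p = s * norm (A - N)" using pN s by simp
  then have "p \<in> ball N r" using close by simp
  moreover have "p \<noteq> N" using pN s \<open>A \<noteq> N\<close> by auto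
  ultimately show ?thesis using that by blast
qed

lemma hat_on_opposite_edge:
  assumes t: "triangle K" and M: "M \<in> K" and x: "x \<in> convex hull (K - {M})"
  shows "hat K M x = 0"
proof -
  obtain A B where K: "K = {M, A, B}" and nc: "\<not> collinear {M, A, B}"
    using triangle_obtain_vertices[OF t M] .
  have "A \<noteq> M" "B \<noteq> M" using noncollinear_distinct[OF nc] by auto
  have "A \<in> K" "B \<in> K" using K by simp_all
  have "K - {M} = {A, B}" using K \<open>A \<noteq> M\<close> \<open>B \<noteq> M\<close> by auto
  then have "x \<in> convex hull {A, B}" using x by simp
  then obtain u v where uv: "x = u *\<^sub>R A + v *\<^sub>R B" "u + v = 1"
    unfolding convex_hull_2 by blast
  have "hat K M x = u * hat K M A + v * hat K M B + 0 * hat K M M"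
    using affine_fun_combination[OF affine_fun_hat[OF t M], of u v 0 A B M] uv by simp
  then show ?thesis
    using hat_other_vertex[OF t M \<open>A \<in> K\<close> \<open>A \<noteq> M\<close>] hat_other_vertex[OF t M \<open>B \<in> K\<close> \<open>B \<noteq> M\<close>]
    by simp
qed

text \<open>The witness is the midpoint of \<open>NB\<close>, pushed slightly towards \<open>A\<close>.\<close>

lemma triangles_overlap_if_same_side:
  assumes nc: "\<not> collinear {N, B, A}" and nc': "\<not> collinear {N, B, E}"
    and pos: "hat {N, B, E} E A > 0"
  obtains p where "p \<in> convex hull {N, B, A}" "p \<in> convex hull {N, B, E}" "hat {N, B, E} E p > 0"
proof -
  define K' where "K' = {N, B, E}"
  have t: "triangle K'" using triangle_if_noncollinear[OF nc'] by (simp add: K'_def)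
  have "N \<in> K'" "B \<in> K'" "E \<in> K'" by (simp_all add: K'_def)
  have "N \<noteq> B" "N \<noteq> E" "B \<noteq> E" using noncollinear_distinct[OF nc'] by auto
  define a where "a = \<bar>hat K' N A\<bar> + \<bar>hat K' B A\<bar>"
  define s where "s = 1 / (2 * (1 + a))"
  have "a \<ge> 0" by (simp add: a_def)
  then have s: "0 < s" "s \<le> 1" "s + 2 * (s * a) \<le> 1" by (simp_all add: s_def field_simps)
  define p where "p = ((1 - s) / 2) *\<^sub>R N + ((1 - s) / 2) *\<^sub>R B + s *\<^sub>R A"
  have sum: "(1 - s) / 2 + (1 - s) / 2 + s = 1" by simp
  have val: "hat K' M p = (1 - s) / 2 * hat K' M N + (1 - s) / 2 * hat K' M B + s * hat K' M A"
    if "M \<in> K'" for M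
    unfolding p_def by (rule affine_fun_combination[OF affine_fun_hat[OF t that] sum])
  have "hat K' N p = (1 - s) / 2 + s * hat K' N A"
    using val[OF \<open>N \<in> K'\<close>] hat_self[OF t \<open>N \<in> K'\<close>]
      hat_other_vertex[OF t \<open>N \<in> K'\<close> \<open>B \<in> K'\<close>] \<open>N \<noteq> B\<close> by simp
  moreover have "hat K' B p = (1 - s) / 2 + s * hat K' B A"
    using val[OF \<open>B \<in> K'\<close>] hat_self[OF t \<open>B \<in> K'\<close>]
      hat_other_vertex[OF t \<open>B \<in> K'\<close> \<open>N \<in> K'\<close>] \<open>N \<noteq> B\<close> by simp
  moreover have "hat K' E p = s * hat K' E A"
    using val[OF \<open>E \<in> K'\<close>] hat_other_vertex[OF t \<open>E \<in> K'\<close> \<open>N \<in> K'\<close>]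
      hat_other_vertex[OF t \<open>E \<in> K'\<close> \<open>B \<in> K'\<close>] \<open>N \<noteq> E\<close> \<open>B \<noteq> E\<close> by simp
  moreover have "0 \<le> (1 - s) / 2 + s * y" if "\<bar>y\<bar> \<le> a" for y
  proof -
    have "- (s * a) \<le> s * y" using mult_left_mono[of "- a" y s] s(1) that by simp
    then show ?thesis using s(3) by argo
  qed
  ultimately have "0 \<le> hat K' N p" "0 \<le> hat K' B p" "0 < hat K' E p"
    using s(1) pos by (simp_all add: a_def K'_def)
  then have "p \<in> convex hull K'"
    using convex_hull_triangle_iff_hat_nonneg[OF nc' K'_def] by simp
  moreover have "p \<in> convex hull {N, B, A}"
    unfolding convex_hull_3 p_def using s
    by (intro CollectI exI[of _ "(1 - s) / 2"] exI[of _ s]) auto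
  ultimately show ?thesis using that \<open>0 < hat K' E p\<close> by (simp add: K'_def)
qed

section \<open>Conforming meshes\<close>

lemma conforming_subset:
  assumes "conforming T0" "T \<subseteq> T0"
  shows "conforming T"
  using assms finite_subset[OF assms(2)] unfolding conforming_def by (metis subsetD)

lemma card_interior_edge: "F \<in> interior_edges T \<Longrightarrow> card F = 2"
  unfolding interior_edges_def by blast

lemma diameter_interior_edge_pos: "F \<in> interior_edges T \<Longrightarrow> diameter F > 0"
proof -
  assume "F \<in> interior_edges T"
  then obtain P Q where F: "F = {P, Q}" "P \<noteq> Q"
    using card_interior_edge unfolding card_2_iff by blast
  have "dist P Q \<le> diameter F"
    by (rule diameter_bounded_bound) (simp_all add: F)
  moreover have "dist P Q > 0" using F by simp
  ultimately show ?thesis by linarith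
qed

lemma edge_through_vertex:
  assumes "card F = 2" "F \<subseteq> {N, A, B}" "N \<in> F"
  shows "F = {N, A} \<or> F = {N, B}"
proof -
  obtain x y where F: "F = {x, y}" "x \<noteq> y" using assms(1) unfolding card_2_iff by blast
  obtain z where z: "F = {N, z}" "z \<noteq> N"
  proof (cases "x = N")
    case True
    then show ?thesis using that[of y] F by auto
  next
    case False
    then show ?thesis using that[of x] F assms(3) by auto
  qed
  then have "z \<in> {A, B}" using assms(2) by auto
  then show ?thesis using z by auto
qed

locale conforming_mesh =
  fixes T :: "vset set"
  assumes conforming: "conforming T"
begin

lemma finite_mesh: "finite T"
  using conforming unfolding conforming_def by blast

lemma triangle_mesh: "K \<in> T \<Longrightarrow> triangle K"
  using conforming unfolding conforming_def by blast

lemma convex_hull_inter: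
  "K \<in> T \<Longrightarrow> K' \<in> T \<Longrightarrow> K \<noteq> K' \<Longrightarrow> convex hull K \<inter> convex hull K' = convex hull (K \<inter> K')"
  using conforming unfolding conforming_def by blast

lemma finite_nodes: "finite (nodes T)"
  unfolding nodes_def by (rule finite_Union) (auto intro: finite_mesh triangle_finite triangle_mesh)

lemma finite_interior_edges: "finite (interior_edges T)"
proof (rule finite_subset)
  show "interior_edges T \<subseteq> Pow (nodes T)" unfolding interior_edges_def nodes_def by blast
qed (simp add: finite_nodes)

text \<open>Two triangles sharing an edge lie on opposite sides of it; otherwise they would overlap.\<close>

lemma hat_opposite_vertex_neg:
  assumes KT: "{N, B, A} \<in> T" "{N, B, E} \<in> T" and ne: "{N, B, A} \<noteq> {N, B, E}"
    and nc: "\<not> collinear {N, B, A}" and nc': "\<not> collinear {N, B, E}"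
  shows "hat {N, B, E} E A < 0"
proof (rule ccontr)
  define K' where "K' = {N, B, E}"
  have t: "triangle K'" using triangle_if_noncollinear[OF nc'] by (simp add: K'_def)
  have "N \<noteq> E" "B \<noteq> E" using noncollinear_distinct[OF nc'] by auto
  have "A \<noteq> E" using ne by auto
  have hE: "hat K' E N = 0" "hat K' E B = 0"
    using hat_other_vertex[OF t] \<open>N \<noteq> E\<close> \<open>B \<noteq> E\<close> by (auto simp: K'_def)
  assume "\<not> hat {N, B, E} E A < 0"
  moreover have "hat K' E A \<noteq> 0"
  proof
    assume "hat K' E A = 0"
    then have "hat K' E E = 0"
      using affine_fun_eq_0_if_noncollinear_zeros[OF affine_fun_hat[OF t] nc, of E E] hE
      by (simp add: K'_def)
    then show False using hat_self[OF t] by (simp add: K'_def)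
  qed
  ultimately have "hat K' E A > 0" by (simp add: K'_def)
  then obtain p where p: "p \<in> convex hull {N, B, A}" "p \<in> convex hull K'" "hat K' E p > 0"
    using triangles_overlap_if_same_side[OF nc nc'] by (auto simp: K'_def)
  have "convex hull {N, B, A} \<inter> convex hull K' = convex hull ({N, B, A} \<inter> K')"
    unfolding K'_def by (rule convex_hull_inter[OF KT ne])
  then have "p \<in> convex hull ({N, B, A} \<inter> K')" using p(1,2) by blast
  moreover have "{N, B, A} \<inter> K' = K' - {E}" using \<open>A \<noteq> E\<close> \<open>N \<noteq> E\<close> \<open>B \<noteq> E\<close> by (auto simp: K'_def)
  ultimately have "p \<in> convex hull (K' - {E})" by simp
  moreover have "E \<in> K'" by (simp add: K'_def)
  ultimately have "hat K' E p = 0" using hat_on_opposite_edge[OF t] by blast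
  then show False using p(3) by simp
qed

lemma no_three_triangles_share_edge:
  assumes KT: "K1 \<in> T" "K2 \<in> T" "K3 \<in> T" and ne: "K1 \<noteq> K2" "K1 \<noteq> K3" "K2 \<noteq> K3"
    and sub: "{P, Q} \<subseteq> K1" "{P, Q} \<subseteq> K2" "{P, Q} \<subseteq> K3" and "P \<noteq> Q"
  shows False
proof -
  obtain C1 where K1: "K1 = {P, Q, C1}" and n1: "\<not> collinear {P, Q, C1}"
    using triangle_obtain_opposite_vertex[OF triangle_mesh[OF KT(1)], of P Q] sub \<open>P \<noteq> Q\<close> by auto
  obtain C2 where K2: "K2 = {P, Q, C2}" and n2: "\<not> collinear {P, Q, C2}"
    using triangle_obtain_opposite_vertex[OF triangle_mesh[OF KT(2)], of P Q] sub \<open>P \<noteq> Q\<close> by auto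
  obtain C3 where K3: "K3 = {P, Q, C3}" and n3: "\<not> collinear {P, Q, C3}"
    using triangle_obtain_opposite_vertex[OF triangle_mesh[OF KT(3)], of P Q] sub \<open>P \<noteq> Q\<close> by auto
  have "hat {P, Q, C2} C2 C1 < 0"
    by (rule hat_opposite_vertex_neg) (use KT ne n1 n2 K1 K2 in auto)
  moreover have "hat {P, Q, C3} C3 C1 < 0"
    by (rule hat_opposite_vertex_neg) (use KT ne n1 n3 K1 K3 in auto)
  moreover have "hat {P, Q, C3} C3 C2 < 0"
    by (rule hat_opposite_vertex_neg) (use KT ne n2 n3 K2 K3 in auto)
  moreover have "hat {P, Q, C3} C3 C1 = hat {P, Q, C3} C3 C2 * hat {P, Q, C2} C2 C1"
    by (rule hat_adjacent_triangle[OF n2 n3])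
  ultimately show False
    using mult_neg_neg[of "hat {P, Q, C3} C3 C2" "hat {P, Q, C2} C2 C1"] by linarith
qed

end

section \<open>Normals, orientation signs and the form \<open>b\<close>\<close>

lemma nF_eq:
  assumes F: "F = {N, A}" and KpF: "Kp F = {N, A, C}" and nc: "\<not> collinear {N, A, C}"
  shows "nF Kp F = ((if cross2 (A - N) (C - N) < 0 then 1 else -1) / norm (A - N)) *\<^sub>R rot90 (A - N)"
proof -
  define d where "d = A - N"
  define c where "c = cross2 d (C - N)"
  define k where "k = (if c < 0 then 1 else -1) / norm d"
  have "N \<noteq> A" "N \<noteq> C" "A \<noteq> C" using noncollinear_distinct[OF nc] by auto
  then have "d \<noteq> 0" and opp: "Kp F - F = {C}" using KpF F by (auto simp: d_def)
  have "c \<noteq> 0" using cross2_neq_0_if_noncollinear[OF nc] by (simp add: c_def d_def)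
  let ?P = "\<lambda>n. norm n = 1 \<and> (\<forall>x\<in>F. \<forall>y\<in>F. n \<bullet> (x - y) = 0) \<and> (\<forall>x\<in>F. \<forall>z\<in>Kp F - F. n \<bullet> (z - x) < 0)"
  have P_iff: "?P n \<longleftrightarrow> norm n = 1 \<and> n \<bullet> d = 0 \<and> n \<bullet> (C - N) < 0" for n
  proof -
    have "n \<bullet> (N - A) = - (n \<bullet> d)" "n \<bullet> (C - A) = n \<bullet> (C - N) - n \<bullet> d"
      by (simp_all add: d_def inner_diff_right)
    then show ?thesis unfolding opp by (auto simp: F d_def)
  qed
  have "?P (k *\<^sub>R rot90 d)"
    unfolding P_iff using \<open>d \<noteq> 0\<close> \<open>c \<noteq> 0\<close>
    by (auto simp: k_def norm_rot90 inner_rot90_self c_def cross2_eq_inner_rot90 divide_less_0_iff)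
  moreover have "n = k *\<^sub>R rot90 d" if "?P n" for n
  proof -
    have n: "norm n = 1" "n \<bullet> d = 0" "n \<bullet> (C - N) < 0" using that P_iff by auto
    define l where "l = cross2 d n / (d \<bullet> d)"
    have nl: "n = l *\<^sub>R rot90 d" using perpendicular_eq_rot90[OF n(2) \<open>d \<noteq> 0\<close>] by (simp add: l_def)
    then have "\<bar>l\<bar> = 1 / norm d" using n(1) \<open>d \<noteq> 0\<close> by (simp add: norm_rot90 field_simps)
    moreover have "l * c < 0" using n(3) nl by (simp add: c_def cross2_eq_inner_rot90)
    ultimately have "l = k"
      using \<open>c \<noteq> 0\<close> by (auto simp: k_def mult_less_0_iff abs_if split: if_splits)
    then show ?thesis using nl by simp
  qed
  ultimately have "nF Kp F = k *\<^sub>R rot90 d"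
    unfolding nF_def by (rule the_equality)
  then show ?thesis by (simp add: k_def c_def d_def)
qed

lemma sgn_ccw_eq:
  assumes F: "F = {N, A}" and KpF: "Kp F = {N, A, C}" and nc: "\<not> collinear {N, A, C}"
  shows "sgn_ccw Kp N F = (if cross2 (A - N) (C - N) < 0 then 1 else -1)"
proof -
  define d where "d = A - N"
  have "N \<noteq> A" using noncollinear_distinct[OF nc] by auto
  then have "the_elem (F - {N}) = A" and pos: "d \<bullet> d / norm d > 0" using F by (auto simp: d_def)
  have "cross2 d (nF Kp F) = (if cross2 d (C - N) < 0 then 1 else -1) * (d \<bullet> d / norm d)"
    using nF_eq[where Kp = Kp and F = F, OF F KpF nc] by (simp add: d_def cross2_scaleR_right cross2_rot90_self)
  then have "cross2 d (nF Kp F) > 0 \<longleftrightarrow> cross2 d (C - N) < 0"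
    using pos by (cases "cross2 d (C - N) < 0") simp_all
  then show ?thesis
    unfolding sgn_ccw_def Let_def \<open>the_elem (F - {N}) = A\<close> by (simp add: cross2_def d_def)
qed

lemma sgn_ccw_sq: "sgn_ccw Kp N F * sgn_ccw Kp N F = 1"
  unfolding sgn_ccw_def Let_def by simp

definition jump_sign :: "(vset \<Rightarrow> vset) \<Rightarrow> vset \<Rightarrow> vset \<Rightarrow> real" where
  "jump_sign Kp K F = (if Kp F = K then 1 else -1)"

text \<open>The summand \<open>s\<^sub>N(F) h\<^sub>F \<mu>\<^sub>F(N)\<close> of the vertex condition in the definition of \<open>M\<^sub>h\<close>.\<close>

definition node_flux :: "(vset \<Rightarrow> vset) \<Rightarrow> (vset \<Rightarrow> pt \<Rightarrow> real) \<Rightarrow> pt \<Rightarrow> vset \<Rightarrow> real" where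
  "node_flux Kp \<mu> N F = sgn_ccw Kp N F * diameter F * \<mu> F N"

lemma zero_mem_Mh: "(\<lambda>_ _. 0) \<in> Mh T Kp"
  unfolding Mh_def by simp

lemma Mh_diff: "\<mu> \<in> Mh T Kp \<Longrightarrow> \<nu> \<in> Mh T Kp \<Longrightarrow> (\<lambda>F M. \<mu> F M - \<nu> F M) \<in> Mh T Kp"
  unfolding Mh_def by (simp add: right_diff_distrib sum_subtractf)

lemma Mh_sum:
  "(\<And>N. N \<in> S \<Longrightarrow> \<theta> N \<in> Mh T Kp) \<Longrightarrow> (\<lambda>F M. \<Sum>N\<in>S. \<theta> N F M) \<in> Mh T Kp"
  unfolding Mh_def by (auto simp: sum_distrib_left sum.swap[where B = S] intro!: sum.neutral)

lemma bform_diff_left: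
  "bform T Kp (\<lambda>F M. \<mu> F M - \<nu> F M) w = bform T Kp \<mu> w - bform T Kp \<nu> w"
  unfolding bform_def by (simp add: left_diff_distrib right_diff_distrib sum_subtractf)

lemma bform_sum_left:
  "bform T Kp (\<lambda>F M. \<Sum>N\<in>S. \<theta> N F M) w = (\<Sum>N\<in>S. bform T Kp (\<theta> N) w)"
  unfolding bform_def by (simp add: sum_distrib_left sum_distrib_right sum.swap[of _ S])

lemma (in conforming_mesh) hatchi_mem_DG:
  assumes "K \<in> T" "M \<in> K"
  shows "hatchi K M \<in> DG T"
  unfolding DG_def hatchi_def
  using affine_fun_hat[OF triangle_mesh[OF assms(1)] assms(2)] assms(1) affine_fun_const[of 0] by auto

locale oriented_mesh = conforming_mesh +
  fixes Kp :: "vset \<Rightarrow> vset"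
  assumes Kp_mem: "F \<in> interior_edges T \<Longrightarrow> Kp F \<in> T"
    and edge_subset_Kp: "F \<in> interior_edges T \<Longrightarrow> F \<subseteq> Kp F"
begin

lemma
  assumes F: "F \<in> interior_edges T"
  shows edge_subset_Km: "F \<subseteq> Km T Kp F" and Km_neq_Kp: "Km T Kp F \<noteq> Kp F"
    and triangle_at_edge: "\<And>K. K \<in> T \<Longrightarrow> F \<subseteq> K \<Longrightarrow> K = Kp F \<or> K = Km T Kp F"
proof -
  obtain K1 K2 where K12: "K1 \<in> T" "K2 \<in> T" "K1 \<noteq> K2" "F \<subseteq> K1" "F \<subseteq> K2"
    and "card F = 2"
    using F unfolding interior_edges_def by blast
  then obtain P Q where PQ: "F = {P, Q}" "P \<noteq> Q" unfolding card_2_iff by blast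
  obtain K' where K': "K' \<in> T" "K' \<noteq> Kp F" "F \<subseteq> K'"
  proof (cases "K1 = Kp F")
    case True
    then show ?thesis using that[of K2] K12 by simp
  next
    case False
    then show ?thesis using that[of K1] K12 by simp
  qed
  have unique: "K = K'" if "K \<in> T" "F \<subseteq> K" "K \<noteq> Kp F" for K
  proof (rule ccontr)
    assume "K \<noteq> K'"
    then show False
      using no_three_triangles_share_edge[OF Kp_mem[OF F] K'(1) that(1), of P Q]
        K' that edge_subset_Kp[OF F] PQ by simp
  qed
  have Km: "Km T Kp F = K'"
    unfolding Km_def by (rule the_equality) (use K' unique in blast)+
  then show "F \<subseteq> Km T Kp F" "Km T Kp F \<noteq> Kp F"
    using K' by simp_all
  show "\<And>K. K \<in> T \<Longrightarrow> F \<subseteq> K \<Longrightarrow> K = Kp F \<or> K = Km T Kp F"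
    using unique unfolding Km by blast
qed

lemma jump_hatchi:
  assumes F: "F \<in> interior_edges T" and "K \<in> T" "M \<in> K" "M' \<in> F"
  shows "jump T Kp (hatchi K M) F M' =
    (if F \<subseteq> K then jump_sign Kp K F * (if M' = M then 1 else 0) else 0)"
proof (cases "F \<subseteq> K")
  case True
  have t: "triangle K" using triangle_mesh[OF \<open>K \<in> T\<close>] .
  have "hat K M M' = (if M' = M then 1 else 0)"
    using hat_self[OF t \<open>M \<in> K\<close>] hat_other_vertex[OF t \<open>M \<in> K\<close>] \<open>M' \<in> F\<close> True by auto
  moreover have "K = Kp F \<or> K = Km T Kp F" using triangle_at_edge[OF F \<open>K \<in> T\<close> True] .
  ultimately show ?thesis
    using Km_neq_Kp[OF F] True unfolding jump_def hatchi_def jump_sign_def by auto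
next
  case False
  then have "Kp F \<noteq> K" "Km T Kp F \<noteq> K" using edge_subset_Kp[OF F] edge_subset_Km[OF F] by auto
  then show ?thesis using False unfolding jump_def hatchi_def by auto
qed

lemma bform_hatchi:
  assumes "K \<in> T" "M \<in> K"
  shows "bform T Kp \<mu> (hatchi K M) =
    (\<Sum>F\<in>{F \<in> interior_edges T. F \<subseteq> K \<and> M \<in> F}. diameter F / 2 * jump_sign Kp K F * \<mu> F M)"
proof -
  have edge_term: "(\<Sum>M'\<in>F. \<mu> F M' * jump T Kp (hatchi K M) F M') =
      (if F \<subseteq> K \<and> M \<in> F then jump_sign Kp K F * \<mu> F M else 0)"
    if F: "F \<in> interior_edges T" for F
  proof -
    have "finite F" using card_interior_edge[OF F] by (simp add: card_ge_0_finite)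
    have "(\<Sum>M'\<in>F. \<mu> F M' * jump T Kp (hatchi K M) F M') =
        (\<Sum>M'\<in>F. if F \<subseteq> K then (if M' = M then jump_sign Kp K F * \<mu> F M' else 0) else 0)"
      by (rule sum.cong) (auto simp: jump_hatchi[OF F assms])
    also have "\<dots> = (if F \<subseteq> K \<and> M \<in> F then jump_sign Kp K F * \<mu> F M else 0)"
      using \<open>finite F\<close> by (cases "F \<subseteq> K") simp_all
    finally show ?thesis .
  qed
  have "bform T Kp \<mu> (hatchi K M) = (\<Sum>F\<in>interior_edges T.
      if F \<subseteq> K \<and> M \<in> F then diameter F / 2 * jump_sign Kp K F * \<mu> F M else 0)"
    unfolding bform_def by (rule sum.cong) (auto simp: edge_term)
  also have "\<dots> = (\<Sum>F\<in>{F \<in> interior_edges T. F \<subseteq> K \<and> M \<in> F}. diameter F / 2 * jump_sign Kp K F * \<mu> F M)"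
    by (rule sum.inter_filter[OF finite_interior_edges, symmetric])
  finally show ?thesis .
qed

lemma bform_hatchi_eq_0:
  assumes "K \<in> T" "M \<in> K"
    and "\<And>F. F \<in> interior_edges T \<Longrightarrow> F \<subseteq> K \<Longrightarrow> M \<in> F \<Longrightarrow> \<mu> F M = 0"
  shows "bform T Kp \<mu> (hatchi K M) = 0"
  unfolding bform_hatchi[OF assms(1,2)] using assms(3) by (intro sum.neutral) auto

text \<open>The orientation of \<open>n\<^sub>F\<close> and the side of \<open>F\<close> on which \<open>K\<close> lies combine to a sign that
  only depends on the orientation of the triangle \<open>{N, A, B}\<close>.\<close>

lemma jump_sign_mul_sgn_ccw:
  assumes KT: "{N, A, B} \<in> T" and nc: "\<not> collinear {N, A, B}" and F: "{N, A} \<in> interior_edges T"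
  shows "jump_sign Kp {N, A, B} {N, A} * sgn_ccw Kp N {N, A} = (if cross2 (A - N) (B - N) < 0 then 1 else -1)"
proof -
  have "N \<noteq> A" "N \<noteq> B" "A \<noteq> B" using noncollinear_distinct[OF nc] by auto
  obtain C where C: "Kp {N, A} = {N, A, C}" and ncC: "\<not> collinear {N, A, C}"
    using triangle_obtain_opposite_vertex[OF triangle_mesh[OF Kp_mem[OF F]], of N A]
      edge_subset_Kp[OF F] \<open>N \<noteq> A\<close> by auto
  have "C \<noteq> N" "C \<noteq> A" using noncollinear_distinct[OF ncC] by auto
  have sgn: "sgn_ccw Kp N {N, A} = (if cross2 (A - N) (C - N) < 0 then 1 else -1)"
    by (rule sgn_ccw_eq[where Kp = Kp and F = "{N, A}", OF refl C ncC])
  have "cross2 (A - N) (B - N) \<noteq> 0" "cross2 (A - N) (C - N) \<noteq> 0"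
    using cross2_neq_0_if_noncollinear nc ncC by auto
  show ?thesis
  proof (cases "Kp {N, A} = {N, A, B}")
    case True
    then have "C = B" using C \<open>C \<noteq> N\<close> \<open>C \<noteq> A\<close> by auto
    then show ?thesis using True sgn by (simp add: jump_sign_def)
  next
    case False
    have "{N, A, C} \<in> T" using Kp_mem[OF F] C by simp
    moreover have "{N, A, B} \<noteq> {N, A, C}" using False C by simp
    ultimately have "hat {N, A, C} C B < 0"
      using hat_opposite_vertex_neg[OF KT _ _ nc ncC] by blast
    then have "cross2 (A - N) (B - N) / cross2 (A - N) (C - N) < 0"
      using hat_eq_cross2[OF ncC] by simp
    then have "cross2 (A - N) (B - N) < 0 \<longleftrightarrow> \<not> cross2 (A - N) (C - N) < 0"
      using \<open>cross2 (A - N) (B - N) \<noteq> 0\<close> \<open>cross2 (A - N) (C - N) \<noteq> 0\<close>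
      by (auto simp: divide_less_0_iff)
    then show ?thesis using False sgn C by (auto simp: jump_sign_def)
  qed
qed

lemma bform_term_eq_node_flux:
  assumes "jump_sign Kp K F * sgn_ccw Kp N F = g"
  shows "diameter F / 2 * jump_sign Kp K F * \<mu> F N = g * node_flux Kp \<mu> N F / 2"
proof -
  have "g * node_flux Kp \<mu> N F = jump_sign Kp K F * (sgn_ccw Kp N F * sgn_ccw Kp N F) * diameter F * \<mu> F N"
    unfolding node_flux_def assms[symmetric] by (simp add: algebra_simps)
  then show ?thesis by (simp add: sgn_ccw_sq)
qed

text \<open>The equation \<open>b(\<mu>, \<lambda>\<^sub>N \<chi>\<^sub>K) = 0\<close> couples the two edges of \<open>K\<close> at \<open>N\<close>; an edge on the
  boundary of the active mesh carries no multiplier.\<close>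

lemma node_flux_across_triangle:
  assumes KT: "{N, A, B} \<in> T" and nc: "\<not> collinear {N, A, B}"
    and orth: "bform T Kp \<mu> (hatchi {N, A, B} N) = 0" and IA: "{N, A} \<in> interior_edges T"
  shows "node_flux Kp \<mu> N {N, A} = (if {N, B} \<in> interior_edges T then node_flux Kp \<mu> N {N, B} else 0)"
proof -
  define K where "K = {N, A, B}"
  define g where "g = (if cross2 (A - N) (B - N) < 0 then 1 else -1 :: real)"
  have "N \<noteq> A" "N \<noteq> B" "A \<noteq> B" using noncollinear_distinct[OF nc] by auto
  then have "{N, A} \<noteq> {N, B}" by (auto simp: doubleton_eq_iff)
  have "g \<noteq> 0" by (simp add: g_def)
  have edges: "{F \<in> interior_edges T. F \<subseteq> K \<and> N \<in> F} = {G \<in> {{N, A}, {N, B}}. G \<in> interior_edges T}"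
    using edge_through_vertex[OF card_interior_edge, of _ T N A B] by (auto simp: K_def)
  have termA: "diameter {N, A} / 2 * jump_sign Kp K {N, A} * \<mu> {N, A} N = g * node_flux Kp \<mu> N {N, A} / 2"
    by (rule bform_term_eq_node_flux) (use jump_sign_mul_sgn_ccw[OF KT nc IA] in \<open>simp add: K_def g_def\<close>)
  have sum: "(\<Sum>F\<in>{G \<in> {{N, A}, {N, B}}. G \<in> interior_edges T}.
      diameter F / 2 * jump_sign Kp K F * \<mu> F N) = 0"
    using orth bform_hatchi[OF KT, of N] edges by (simp add: K_def)
  show ?thesis
  proof (cases "{N, B} \<in> interior_edges T")
    case True
    have KB: "{N, B, A} \<in> T" "\<not> collinear {N, B, A}" using KT nc by (simp_all add: insert_commute)
    have "jump_sign Kp K {N, B} * sgn_ccw Kp N {N, B} = - g"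
      using jump_sign_mul_sgn_ccw[OF KB True] cross2_swap[of "B - N" "A - N"]
        cross2_neq_0_if_noncollinear[OF nc]
      by (auto simp: K_def g_def insert_commute)
    then have termB: "diameter {N, B} / 2 * jump_sign Kp K {N, B} * \<mu> {N, B} N
        = - g * node_flux Kp \<mu> N {N, B} / 2"
      by (rule bform_term_eq_node_flux)
    have "{G \<in> {{N, A}, {N, B}}. G \<in> interior_edges T} = {{N, A}, {N, B}}" using IA True by auto
    then have "0 = (\<Sum>F\<in>{{N, A}, {N, B}}. diameter F / 2 * jump_sign Kp K F * \<mu> F N)"
      using sum by simp
    also have "\<dots> = diameter {N, A} / 2 * jump_sign Kp K {N, A} * \<mu> {N, A} N
        + diameter {N, B} / 2 * jump_sign Kp K {N, B} * \<mu> {N, B} N"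
      using \<open>{N, A} \<noteq> {N, B}\<close> by simp
    also have "\<dots> = g * (node_flux Kp \<mu> N {N, A} - node_flux Kp \<mu> N {N, B}) / 2"
      unfolding termA termB by (simp add: algebra_simps)
    finally have "g * (node_flux Kp \<mu> N {N, A} - node_flux Kp \<mu> N {N, B}) = 0" by simp
    then show ?thesis using True \<open>g \<noteq> 0\<close> by simp
  next
    case False
    then have "{G \<in> {{N, A}, {N, B}}. G \<in> interior_edges T} = {{N, A}}" using IA by auto
    then have "0 = diameter {N, A} / 2 * jump_sign Kp K {N, A} * \<mu> {N, A} N" using sum by simp
    then have "g * node_flux Kp \<mu> N {N, A} = 0" unfolding termA by simp
    then show ?thesis using False \<open>g \<noteq> 0\<close> by simp
  qed
qed

lemma node_flux_eq_in_triangle: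
  assumes KT: "K \<in> T" "N \<in> K" and orth: "bform T Kp \<mu> (hatchi K N) = 0"
    and G: "G \<in> interior_edges T" "N \<in> G" "G \<subseteq> K"
    and G': "G' \<in> interior_edges T" "N \<in> G'" "G' \<subseteq> K"
  shows "node_flux Kp \<mu> N G = node_flux Kp \<mu> N G'"
proof -
  obtain A B where K: "K = {N, A, B}" and nc: "\<not> collinear {N, A, B}"
    using triangle_obtain_vertices[OF triangle_mesh[OF KT(1)] KT(2)] .
  have "{N, A, B} \<in> T" "bform T Kp \<mu> (hatchi {N, A, B} N) = 0" using KT(1) orth K by simp_all
  note relA = node_flux_across_triangle[OF this(1) nc this(2)]
  have "G = {N, A} \<or> G = {N, B}"
    by (rule edge_through_vertex[OF card_interior_edge[OF G(1)] _ G(2)]) (use G(3) K in simp)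
  moreover have "G' = {N, A} \<or> G' = {N, B}"
    by (rule edge_through_vertex[OF card_interior_edge[OF G'(1)] _ G'(2)]) (use G'(3) K in simp)
  ultimately show ?thesis using G(1) G'(1) by (elim disjE) (simp_all add: relA)
qed

lemma node_flux_eq_0_in_triangle:
  assumes KT: "K \<in> T" "N \<in> K" and orth: "bform T Kp \<mu> (hatchi K N) = 0"
    and G: "G \<in> interior_edges T" "N \<in> G" "G \<subseteq> K"
    and C: "C \<in> K" "C \<noteq> N" "{N, C} \<notin> interior_edges T"
  shows "node_flux Kp \<mu> N G = 0"
proof -
  obtain A B where K: "K = {N, A, B}" and nc: "\<not> collinear {N, A, B}"
    using triangle_obtain_vertices[OF triangle_mesh[OF KT(1)] KT(2)] .
  have KA: "{N, A, B} \<in> T" "bform T Kp \<mu> (hatchi {N, A, B} N) = 0" using KT(1) orth K by simp_all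
  have KB: "{N, B, A} \<in> T" "\<not> collinear {N, B, A}" "bform T Kp \<mu> (hatchi {N, B, A} N) = 0"
    using KA nc by (simp_all add: insert_commute)
  have "G = {N, A} \<or> G = {N, B}"
    by (rule edge_through_vertex[OF card_interior_edge[OF G(1)] _ G(2)]) (use G(3) K in simp)
  moreover have "C = A \<or> C = B" using C K by auto
  ultimately show ?thesis
  proof (elim disjE)
    assume "G = {N, A}" "C = B"
    then show ?thesis using node_flux_across_triangle[OF KA(1) nc KA(2)] G(1) C(3) by simp
  next
    assume "G = {N, B}" "C = A"
    then show ?thesis using node_flux_across_triangle[OF KB] G(1) C(3) by simp
  qed (use G(1) C(3) in simp_all)
qed

end

section \<open>Stars of a vertex\<close>

definition star_closed :: "vset set \<Rightarrow> pt \<Rightarrow> vset set \<Rightarrow> bool" where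
  "star_closed T N C \<longleftrightarrow> C \<subseteq> T \<and> (\<forall>K\<in>C. N \<in> K) \<and>
     (\<forall>K\<in>C. \<forall>K'\<in>T. \<forall>G\<in>interior_edges T. N \<in> G \<and> G \<subseteq> K \<and> G \<subseteq> K' \<longrightarrow> K' \<in> C)"

context conforming_mesh
begin

lemma shared_interior_edge_if_overlap:
  assumes KT: "K \<in> T" "K' \<in> T" "K \<noteq> K'" and "N \<in> K"
    and x: "x \<in> convex hull K" "x \<in> convex hull K'" and "hat K N x > 0" and "x \<noteq> N"
  obtains G where "G \<in> interior_edges T" "N \<in> G" "G \<subseteq> K" "G \<subseteq> K'"
proof -
  have t: "triangle K" using triangle_mesh[OF KT(1)] .
  have x': "x \<in> convex hull (K \<inter> K')" using convex_hull_inter[OF KT] x by blast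
  have "N \<in> K'"
  proof (rule ccontr)
    assume "N \<notin> K'"
    then have "convex hull (K \<inter> K') \<subseteq> convex hull (K - {N})" by (intro hull_mono) auto
    then have "hat K N x = 0" using hat_on_opposite_edge[OF t \<open>N \<in> K\<close>] x' by blast
    then show False using \<open>hat K N x > 0\<close> by simp
  qed
  obtain A where A: "A \<in> K \<inter> K'" "A \<noteq> N"
  proof (rule ccontr)
    assume "\<not> thesis"
    then have "K \<inter> K' = {N}" using that \<open>N \<in> K\<close> \<open>N \<in> K'\<close> by blast
    then show False using x' \<open>x \<noteq> N\<close> by simp
  qed
  have "{N, A} \<in> interior_edges T"
    unfolding interior_edges_def using KT A \<open>N \<in> K\<close> \<open>N \<in> K'\<close> by auto
  then show ?thesis using that A \<open>N \<in> K\<close> \<open>N \<in> K'\<close> by simp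
qed

lemma interior_union_at_common_edge:
  assumes KT: "{N, B, A} \<in> T" "{N, B, E} \<in> T" and ne: "{N, B, A} \<noteq> {N, B, E}"
    and nc: "\<not> collinear {N, B, A}" and nc': "\<not> collinear {N, B, E}"
    and on_edge: "hat {N, B, A} A x = 0" "hat {N, B, A} N x > 0" "hat {N, B, A} B x > 0"
  shows "x \<in> interior (convex hull {N, B, A} \<union> convex hull {N, B, E})"
proof (rule interiorI)
  define K where "K = {N, B, A}"
  define K' where "K' = {N, B, E}"
  have t: "triangle K" "triangle K'" using triangle_if_noncollinear nc nc' by (auto simp: K_def K'_def)
  let ?W = "{z. hat K N z > 0} \<inter> {z. hat K B z > 0} \<inter> {z. hat K' N z > 0} \<inter> {z. hat K' B z > 0}"
  show "open ?W"
    by (intro open_Int open_affine_fun_pos affine_fun_hat t) (simp_all add: K_def K'_def)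
  have sum: "hat K N x + hat K B x + 0 = 1"
    using hat_sum[OF nc K_def, of x] on_edge(1) by (simp add: K_def)
  have "x = hat K N x *\<^sub>R N + hat K B x *\<^sub>R B + 0 *\<^sub>R E"
    using barycentric_decomposition[OF nc K_def, of x] on_edge(1) by (simp add: K_def)
  then have "hat K' M x = hat K' M (hat K N x *\<^sub>R N + hat K B x *\<^sub>R B + 0 *\<^sub>R E)" for M
    by (rule arg_cong)
  moreover have "hat K' N (hat K N x *\<^sub>R N + hat K B x *\<^sub>R B + 0 *\<^sub>R E) = hat K N x"
    by (rule hat_convex_combination[OF nc' K'_def sum])
  moreover have "hat K' B (hat K B x *\<^sub>R B + 0 *\<^sub>R E + hat K N x *\<^sub>R N) = hat K B x"
    using sum nc' by (intro hat_convex_combination) (auto simp: K'_def insert_commute)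
  ultimately have "hat K' N x = hat K N x" "hat K' B x = hat K B x" by (simp_all add: algebra_simps)
  then show "x \<in> ?W" using on_edge by (simp add: K_def)
  show "?W \<subseteq> convex hull {N, B, A} \<union> convex hull {N, B, E}"
  proof
    fix z assume z: "z \<in> ?W"
    show "z \<in> convex hull {N, B, A} \<union> convex hull {N, B, E}"
    proof (cases "hat K A z \<ge> 0")
      case True
      then have "z \<in> convex hull K"
        using z convex_hull_triangle_iff_hat_nonneg[OF nc K_def] by auto
      then show ?thesis by (simp add: K_def)
    next
      case False
      have "hat K' E z = hat K' E A * hat K A z"
        unfolding K_def K'_def by (rule hat_adjacent_triangle[OF nc nc'])
      then have "hat K' E z > 0"
        using hat_opposite_vertex_neg[OF KT ne nc nc'] False by (simp add: K'_def mult_neg_neg)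
      then have "z \<in> convex hull K'"
        using z convex_hull_triangle_iff_hat_nonneg[OF nc' K'_def] by auto
      then show ?thesis by (simp add: K'_def)
    qed
  qed
qed

lemma star_closedD:
  assumes "star_closed T N C"
  shows "C \<subseteq> T" "K \<in> C \<Longrightarrow> N \<in> K"
    "K \<in> C \<Longrightarrow> K' \<in> T \<Longrightarrow> G \<in> interior_edges T \<Longrightarrow> N \<in> G \<Longrightarrow> G \<subseteq> K \<Longrightarrow> G \<subseteq> K' \<Longrightarrow> K' \<in> C"
  using assms unfolding star_closed_def by blast+

lemma interior_star_at_edge:
  assumes C: "star_closed T N C"
    and inner: "\<And>K A. K \<in> C \<Longrightarrow> A \<in> K \<Longrightarrow> A \<noteq> N \<Longrightarrow> {N, A} \<in> interior_edges T"
    and KC: "{N, B, A} \<in> C" and nc: "\<not> collinear {N, B, A}"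
    and on_edge: "hat {N, B, A} A x = 0" "hat {N, B, A} N x > 0" "hat {N, B, A} B x > 0"
  shows "x \<in> interior (\<Union>K\<in>C. convex hull K)"
proof -
  have "N \<noteq> B" using noncollinear_distinct[OF nc] by auto
  have KT: "{N, B, A} \<in> T" using KC star_closedD(1)[OF C] by blast
  have NB: "{N, B} \<in> interior_edges T" using inner[OF KC _ \<open>N \<noteq> B\<close>[symmetric]] by simp
  then obtain K1 K2 where K12: "K1 \<in> T" "K2 \<in> T" "K1 \<noteq> K2" "{N, B} \<subseteq> K1" "{N, B} \<subseteq> K2"
    unfolding interior_edges_def by blast
  obtain K' where K': "K' \<in> T" "K' \<noteq> {N, B, A}" "{N, B} \<subseteq> K'"
  proof (cases "K1 = {N, B, A}")
    case True
    then show ?thesis using that[of K2] K12 by simp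
  next
    case False
    then show ?thesis using that[of K1] K12 by simp
  qed
  have "K' \<in> C" using star_closedD(3)[OF C KC K'(1) NB] K'(3) by simp
  obtain E where E: "K' = {N, B, E}" and nc': "\<not> collinear {N, B, E}"
    using triangle_obtain_opposite_vertex[OF triangle_mesh[OF K'(1)], of N B] K'(3) \<open>N \<noteq> B\<close> by auto
  have "x \<in> interior (convex hull {N, B, A} \<union> convex hull {N, B, E})"
    using interior_union_at_common_edge[OF KT _ _ nc nc' on_edge] K' E by simp
  moreover have "convex hull {N, B, A} \<union> convex hull {N, B, E} \<subseteq> (\<Union>K\<in>C. convex hull K)"
    using KC \<open>K' \<in> C\<close> E by auto
  ultimately show ?thesis using interior_mono by blast
qed

text \<open>Since \<open>hat K N x > 0\<close>, the point \<open>x \<noteq> N\<close> lies either inside \<open>K\<close> or in the relative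
  interior of an edge of \<open>K\<close> through \<open>N\<close>.\<close>

lemma interior_star_near_vertex:
  assumes C: "star_closed T N C"
    and inner: "\<And>K A. K \<in> C \<Longrightarrow> A \<in> K \<Longrightarrow> A \<noteq> N \<Longrightarrow> {N, A} \<in> interior_edges T"
    and KC: "K \<in> C" and x: "x \<in> convex hull K" "x \<noteq> N" and pos: "hat K N x > 0"
  shows "x \<in> interior (\<Union>K\<in>C. convex hull K)"
proof -
  have KT: "K \<in> T" "N \<in> K" using KC star_closedD[OF C] by auto
  obtain A B where K: "K = {N, A, B}" and nc: "\<not> collinear {N, A, B}"
    using triangle_obtain_vertices[OF triangle_mesh[OF KT(1)] KT(2)] .
  have K': "K = {N, B, A}" and nc': "\<not> collinear {N, B, A}" using K nc by (simp_all add: insert_commute)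
  have nonneg: "hat K A x \<ge> 0" "hat K B x \<ge> 0"
    using convex_hull_triangle_iff_hat_nonneg[OF nc K] x(1) by auto
  have "hat K A x \<noteq> 0 \<or> hat K B x \<noteq> 0"
  proof (rule ccontr)
    assume "\<not> ?thesis"
    then have "x = N"
      using hat_sum[OF nc K, of x] barycentric_decomposition[OF nc K, of x] by simp
    then show False using x(2) by simp
  qed
  then consider "hat K A x > 0" "hat K B x > 0" | "hat K A x = 0" "hat K B x > 0"
    | "hat K B x = 0" "hat K A x > 0"
    using nonneg by fastforce
  then show ?thesis
  proof cases
    case 1
    then have "x \<in> interior (convex hull K)" using interior_convex_hull_if_hat_pos[OF nc K pos] by blast
    then show ?thesis using KC interior_mono[of "convex hull K" "\<Union>K\<in>C. convex hull K"] by blast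
  next
    case 2
    then show ?thesis using interior_star_at_edge[OF C inner _ nc', where x = x] KC pos K' by simp
  next
    case 3
    then show ?thesis using interior_star_at_edge[OF C inner _ nc, where x = x] KC pos K by simp
  qed
qed

text \<open>The union of \<open>C\<close> is closed, and by the previous lemma its trace on a small punctured
  disc around \<open>N\<close> is also open in the disc; the punctured disc being connected, it is covered.\<close>

lemma star_closed_covers_ball:
  assumes C: "star_closed T N C" "C \<noteq> {}"
    and inner: "\<And>K A. K \<in> C \<Longrightarrow> A \<in> K \<Longrightarrow> A \<noteq> N \<Longrightarrow> {N, A} \<in> interior_edges T"
  obtains r where "r > 0" "ball N r \<subseteq> (\<Union>K\<in>C. convex hull K)"
proof -
  let ?U = "\<Union>K\<in>C. convex hull K"
  have finC: "finite C" using star_closedD(1)[OF C(1)] finite_mesh finite_subset by blast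
  have triC: "\<And>K. K \<in> C \<Longrightarrow> triangle K \<and> N \<in> K"
    using star_closedD[OF C(1)] triangle_mesh by blast
  obtain r where r: "r > 0" "\<And>K x. K \<in> C \<Longrightarrow> x \<in> ball N r \<Longrightarrow> hat K N x > 0"
    using hat_pos_near_vertex[OF finC triC] by blast
  define S where "S = ball N r - {N}"
  have "closed ?U"
  proof (rule closed_UN[OF finC], intro ballI)
    fix K assume "K \<in> C"
    then have "finite K" using triC triangle_finite by blast
    then show "closed (convex hull K)" by (simp add: compact_imp_closed finite_imp_compact_convex_hull)
  qed
  have loc: "x \<in> interior ?U" if xU: "x \<in> ?U" and xS: "x \<in> S" for x
  proof -
    obtain K where "K \<in> C" "x \<in> convex hull K" using xU by blast
    then show ?thesis
      by (intro interior_star_near_vertex[OF C(1) inner]) (use r(2) xS in \<open>auto simp: S_def\<close>)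
  qed
  obtain K0 where "K0 \<in> C" using C(2) by blast
  then obtain p where p: "p \<in> convex hull K0" "p \<in> ball N r" "p \<noteq> N"
    using triangle_meets_punctured_ball[OF _ _ r(1)] triC by blast
  have "interior ?U \<inter> S = {} \<or> - ?U \<inter> S = {}"
  proof (rule connectedD)
    show "connected S" unfolding S_def by (rule connected_punctured_ball) simp
    show "open (- ?U)" by (rule open_Compl[OF \<open>closed ?U\<close>])
    show "S \<subseteq> interior ?U \<union> - ?U" using loc by blast
  qed (use interior_subset in auto)
  moreover have "p \<in> interior ?U \<inter> S" using loc p \<open>K0 \<in> C\<close> by (auto simp: S_def)
  ultimately have "S \<subseteq> ?U" by blast
  moreover have "N \<in> ?U" using \<open>K0 \<in> C\<close> triC by (blast intro: hull_inc)
  ultimately have "ball N r \<subseteq> ?U" by (auto simp: S_def)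
  then show ?thesis using that r(1) by blast
qed

lemma star_closed_eq_star:
  assumes C: "star_closed T N C" "C \<noteq> {}"
    and inner: "\<And>K A. K \<in> C \<Longrightarrow> A \<in> K \<Longrightarrow> A \<noteq> N \<Longrightarrow> {N, A} \<in> interior_edges T"
  shows "N \<in> interior (mesh_dom T)" and "\<And>K. K \<in> T \<Longrightarrow> N \<in> K \<Longrightarrow> K \<in> C"
proof -
  obtain r where r: "r > 0" "ball N r \<subseteq> (\<Union>K\<in>C. convex hull K)"
    using star_closed_covers_ball[OF C inner] .
  have "(\<Union>K\<in>C. convex hull K) \<subseteq> mesh_dom T"
    using star_closedD(1)[OF C(1)] unfolding mesh_dom_def by auto
  then have "ball N r \<subseteq> mesh_dom T" using r(2) by (rule order_trans[rotated])
  then show "N \<in> interior (mesh_dom T)" unfolding mem_interior using r(1) by blast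
  have star: "finite {K \<in> T. N \<in> K}" "\<And>K. K \<in> {K \<in> T. N \<in> K} \<Longrightarrow> triangle K \<and> N \<in> K"
    using finite_mesh triangle_mesh by simp_all
  obtain r' where r': "r' > 0" "\<And>K x. K \<in> {K \<in> T. N \<in> K} \<Longrightarrow> x \<in> ball N r' \<Longrightarrow> hat K N x > 0"
    using hat_pos_near_vertex[OF star] by blast
  fix K' assume K': "K' \<in> T" "N \<in> K'"
  obtain q where q: "q \<in> convex hull K'" "q \<in> ball N (min r r')" "q \<noteq> N"
    using triangle_meets_punctured_ball[OF triangle_mesh[OF K'(1)] K'(2), where r = "min r r'"] r(1) r'(1)
    by auto
  then have "q \<in> (\<Union>K\<in>C. convex hull K)" using r(2) by auto
  then obtain K where K: "K \<in> C" "q \<in> convex hull K" by blast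
  have KT: "K \<in> T" "N \<in> K" using K(1) star_closedD[OF C(1)] by auto
  show "K' \<in> C"
  proof (cases "K = K'")
    case False
    have "hat K N q > 0" using r'(2)[of K q] KT q(2) by simp
    with False obtain G where "G \<in> interior_edges T" "N \<in> G" "G \<subseteq> K" "G \<subseteq> K'"
      using shared_interior_edge_if_overlap[OF KT(1) K'(1) False KT(2) K(2) q(1) _ q(3)] by blast
    then show ?thesis using star_closedD(3)[OF C(1) K(1) K'(1)] by blast
  qed (use K in simp)
qed

end

section \<open>Uniqueness of the multiplier\<close>

context oriented_mesh
begin

lemma flux_level_star:
  assumes orth: "\<And>K. K \<in> T \<Longrightarrow> N \<in> K \<Longrightarrow> bform T Kp \<mu> (hatchi K N) = 0" and "c \<noteq> 0"
  defines "C \<equiv> {K \<in> T. N \<in> K \<and> (\<exists>G\<in>interior_edges T. N \<in> G \<and> G \<subseteq> K \<and> node_flux Kp \<mu> N G = c)}"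
  shows "\<And>K G. K \<in> C \<Longrightarrow> G \<in> interior_edges T \<Longrightarrow> N \<in> G \<Longrightarrow> G \<subseteq> K \<Longrightarrow> node_flux Kp \<mu> N G = c"
    and "star_closed T N C"
    and "\<And>K A. K \<in> C \<Longrightarrow> A \<in> K \<Longrightarrow> A \<noteq> N \<Longrightarrow> {N, A} \<in> interior_edges T"
proof -
  show flux: "node_flux Kp \<mu> N G = c"
    if "K \<in> C" and G: "G \<in> interior_edges T" "N \<in> G" "G \<subseteq> K" for K G
  proof -
    obtain G0 where G0: "G0 \<in> interior_edges T" "N \<in> G0" "G0 \<subseteq> K" "node_flux Kp \<mu> N G0 = c"
      and K: "K \<in> T" "N \<in> K" using \<open>K \<in> C\<close> unfolding C_def by blast
    have "node_flux Kp \<mu> N G = node_flux Kp \<mu> N G0"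
      by (rule node_flux_eq_in_triangle[OF K orth[OF K] G G0(1-3)])
    then show ?thesis using G0(4) by simp
  qed
  show "star_closed T N C"
    unfolding star_closed_def
  proof (intro conjI ballI impI)
    fix K K' G assume "K \<in> C" "K' \<in> T" "G \<in> interior_edges T" "N \<in> G \<and> G \<subseteq> K \<and> G \<subseteq> K'"
    then show "K' \<in> C" using flux[of K G] unfolding C_def by blast
  qed (auto simp: C_def)
  show "{N, A} \<in> interior_edges T" if "K \<in> C" "A \<in> K" "A \<noteq> N" for K A
  proof (rule ccontr)
    assume "{N, A} \<notin> interior_edges T"
    obtain G where G: "G \<in> interior_edges T" "N \<in> G" "G \<subseteq> K" "node_flux Kp \<mu> N G = c"
      and K: "K \<in> T" "N \<in> K" using \<open>K \<in> C\<close> unfolding C_def by blast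
    have "node_flux Kp \<mu> N G = 0"
      by (rule node_flux_eq_0_in_triangle[OF K orth[OF K] G(1-3) that(2,3) \<open>{N, A} \<notin> interior_edges T\<close>])
    then show False using G(4) \<open>c \<noteq> 0\<close> by simp
  qed
qed

lemma node_flux_eq_0:
  assumes \<mu>: "\<mu> \<in> Mh T Kp" and orth: "\<And>K. K \<in> T \<Longrightarrow> N \<in> K \<Longrightarrow> bform T Kp \<mu> (hatchi K N) = 0"
    and F: "F \<in> interior_edges T" "N \<in> F"
  shows "node_flux Kp \<mu> N F = 0"
proof (rule ccontr)
  define c where "c = node_flux Kp \<mu> N F"
  assume "node_flux Kp \<mu> N F \<noteq> 0"
  then have "c \<noteq> 0" unfolding c_def .
  define C where "C = {K \<in> T. N \<in> K \<and> (\<exists>G\<in>interior_edges T. N \<in> G \<and> G \<subseteq> K \<and> node_flux Kp \<mu> N G = c)}"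
  have closed: "star_closed T N C"
    using orth \<open>c \<noteq> 0\<close> unfolding C_def by (rule flux_level_star(2))
  have inner: "{N, A} \<in> interior_edges T" if "K \<in> C" "A \<in> K" "A \<noteq> N" for K A
    using orth \<open>c \<noteq> 0\<close> that unfolding C_def by (rule flux_level_star(3))
  have flux: "node_flux Kp \<mu> N G = c" if "K \<in> C" "G \<in> interior_edges T" "N \<in> G" "G \<subseteq> K" for K G
    using orth \<open>c \<noteq> 0\<close> that unfolding C_def by (rule flux_level_star(1))
  have "Kp F \<in> C" unfolding C_def using Kp_mem[OF F(1)] edge_subset_Kp[OF F(1)] F c_def by blast
  then have "C \<noteq> {}" by blast
  have "N \<in> interior (mesh_dom T)"
    using inner by (rule star_closed_eq_star(1)[OF closed \<open>C \<noteq> {}\<close>])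
  then have "N \<notin> frontier (mesh_dom T)" unfolding frontier_def by blast
  moreover have "N \<in> nodes T" using Kp_mem[OF F(1)] edge_subset_Kp[OF F(1)] F(2) unfolding nodes_def by blast
  ultimately have "N \<in> interior_nodes T" unfolding interior_nodes_def by blast
  then have "(\<Sum>G\<in>{G \<in> interior_edges T. N \<in> G}. node_flux Kp \<mu> N G) = 0"
    using \<mu> unfolding Mh_def node_flux_def by simp
  moreover have "node_flux Kp \<mu> N G = c" if G: "G \<in> {G \<in> interior_edges T. N \<in> G}" for G
  proof -
    have "G \<in> interior_edges T" "N \<in> G" using G by simp_all
    then have "Kp G \<in> T" "N \<in> Kp G" using Kp_mem edge_subset_Kp by blast+
    with inner have "Kp G \<in> C" by (rule star_closed_eq_star(2)[OF closed \<open>C \<noteq> {}\<close>])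
    then show ?thesis
      by (rule flux[OF _ \<open>G \<in> interior_edges T\<close> \<open>N \<in> G\<close> edge_subset_Kp[OF \<open>G \<in> interior_edges T\<close>]])
  qed
  ultimately have "real (card {G \<in> interior_edges T. N \<in> G}) * c = 0" by simp
  moreover have "card {G \<in> interior_edges T. N \<in> G} > 0"
    using F finite_interior_edges by (auto simp: card_gt_0_iff)
  ultimately show False using \<open>c \<noteq> 0\<close> by simp
qed

lemma Mh_eq_0_if_bform_hatchi_eq_0:
  assumes \<mu>: "\<mu> \<in> Mh T Kp" and orth: "\<And>K M. K \<in> T \<Longrightarrow> M \<in> K \<Longrightarrow> bform T Kp \<mu> (hatchi K M) = 0"
  shows "\<mu> F N = 0"
proof (cases "F \<in> interior_edges T \<and> N \<in> F")
  case True
  then have "sgn_ccw Kp N F * diameter F * \<mu> F N = 0"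
    using node_flux_eq_0[OF \<mu> orth] unfolding node_flux_def by blast
  moreover have "sgn_ccw Kp N F \<noteq> 0" using sgn_ccw_sq[of Kp N F] by auto
  moreover have "diameter F \<noteq> 0" using diameter_interior_edge_pos True by force
  ultimately show ?thesis by simp
qed (use \<mu> in \<open>auto simp: Mh_def\<close>)

end

section \<open>Local multipliers\<close>

definition local_multiplier ::
    "vset set \<Rightarrow> (vset \<Rightarrow> vset) \<Rightarrow> ((vset \<Rightarrow> pt \<Rightarrow> real) \<Rightarrow> real) \<Rightarrow> pt \<Rightarrow> (vset \<Rightarrow> pt \<Rightarrow> real) \<Rightarrow> bool"
  where
  "local_multiplier T Kp r N \<theta>N \<longleftrightarrow>
     (if {F \<in> interior_edges T. N \<in> F} \<noteq> {} then
        \<theta>N \<in> Mh T Kp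
        \<and> (\<forall>F \<in> interior_edges T. N \<notin> F \<longrightarrow> (\<forall>M. \<theta>N F M = 0))
        \<and> (\<forall>K \<in> T. N \<in> K \<longrightarrow>
              bform T Kp \<theta>N (hatchi K N) = r (hatchi K N)
              \<and> (\<forall>M \<in> K. M \<noteq> N \<longrightarrow> bform T Kp \<theta>N (hatchi K M) = 0))
      else \<theta>N = (\<lambda>_ _. 0))"

context oriented_mesh
begin

lemma local_multiplier_mem_Mh: "local_multiplier T Kp r N \<theta>N \<Longrightarrow> \<theta>N \<in> Mh T Kp"
  unfolding local_multiplier_def using zero_mem_Mh by (auto split: if_splits)

lemma bform_local_multiplier_hatchi_other:
  assumes \<theta>N: "local_multiplier T Kp r N \<theta>N" and "K \<in> T" "M \<in> K" "M \<noteq> N"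
  shows "bform T Kp \<theta>N (hatchi K M) = 0"
proof (cases "{F \<in> interior_edges T. N \<in> F} \<noteq> {} \<and> N \<in> K")
  case True
  then show ?thesis using \<theta>N assms(2-4) unfolding local_multiplier_def by auto
next
  case False
  have "\<theta>N F M = 0" if "F \<in> interior_edges T" "F \<subseteq> K" for F
    using \<theta>N False that unfolding local_multiplier_def by (auto split: if_splits)
  then show ?thesis using bform_hatchi_eq_0[OF assms(2,3)] by blast
qed

lemma bform_local_multiplier_hatchi_self:
  assumes \<theta>N: "local_multiplier T Kp r N \<theta>N" and "K \<in> T" "N \<in> K"
    and "bform T Kp \<mu> (hatchi K N) = r (hatchi K N)"
  shows "bform T Kp \<theta>N (hatchi K N) = r (hatchi K N)"
proof (cases "{F \<in> interior_edges T. N \<in> F} \<noteq> {}")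
  case True
  then show ?thesis using \<theta>N assms(2,3) unfolding local_multiplier_def by auto
next
  case False
  then have "bform T Kp \<nu> (hatchi K N) = 0" for \<nu>
    using bform_hatchi_eq_0[OF assms(2,3)] by blast
  then show ?thesis using assms(4) by metis
qed

lemma multiplier_eq_sum_local_multipliers:
  assumes loc: "\<And>N. N \<in> nodes T \<Longrightarrow> local_multiplier T Kp r N (\<theta> N)"
    and \<theta>h: "\<theta>h \<in> Mh T Kp" and res: "\<And>w. w \<in> DG T \<Longrightarrow> bform T Kp \<theta>h w = r w"
  shows "\<theta>h F M = (\<Sum>N\<in>nodes T. \<theta> N F M)"
proof -
  define D where "D = (\<lambda>F M. \<theta>h F M - (\<Sum>N\<in>nodes T. \<theta> N F M))"
  have "D \<in> Mh T Kp"
    unfolding D_def using \<theta>h local_multiplier_mem_Mh[OF loc] by (intro Mh_diff Mh_sum)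
  moreover have "bform T Kp D (hatchi K M) = 0" if K: "K \<in> T" "M \<in> K" for K M
  proof -
    have "M \<in> nodes T" using K unfolding nodes_def by blast
    have r: "bform T Kp \<theta>h (hatchi K M) = r (hatchi K M)" using res[OF hatchi_mem_DG[OF K]] .
    have "(\<Sum>N\<in>nodes T. bform T Kp (\<theta> N) (hatchi K M))
        = bform T Kp (\<theta> M) (hatchi K M) + (\<Sum>N\<in>nodes T - {M}. bform T Kp (\<theta> N) (hatchi K M))"
      by (rule sum.remove[OF finite_nodes \<open>M \<in> nodes T\<close>])
    also have "(\<Sum>N\<in>nodes T - {M}. bform T Kp (\<theta> N) (hatchi K M)) = 0"
    proof (rule sum.neutral, intro ballI)
      fix N assume "N \<in> nodes T - {M}"
      then show "bform T Kp (\<theta> N) (hatchi K M) = 0"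
        using bform_local_multiplier_hatchi_other[OF loc[of N] K] by auto
    qed
    also have "bform T Kp (\<theta> M) (hatchi K M) = r (hatchi K M)"
      by (rule bform_local_multiplier_hatchi_self[OF loc[OF \<open>M \<in> nodes T\<close>] K r])
    finally show ?thesis using r unfolding D_def bform_diff_left bform_sum_left by simp
  qed
  ultimately have "D F M = 0" by (rule Mh_eq_0_if_bform_hatchi_eq_0)
  then show ?thesis by (simp add: D_def)
qed

end

theorem mainTheorem4:
  fixes T0 T :: "vset set" and \<Omega> \<Omega>h :: "pt set"
    and \<Gamma> :: "vset \<Rightarrow> pt \<times> pt" and nh :: "vset \<Rightarrow> pt"
    and f gh :: "pt \<Rightarrow> real" and \<beta> \<gamma> :: real
    and Kp :: "vset \<Rightarrow> vset"
    and uh \<theta>h :: "vset \<Rightarrow> pt \<Rightarrow> real"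
    and \<theta> :: "pt \<Rightarrow> vset \<Rightarrow> pt \<Rightarrow> real"
  assumes T0: "conforming T0"
    and \<Omega>: "open \<Omega>" "connected \<Omega>" "bounded \<Omega>" "\<Omega> \<subseteq> \<Omega>h"
    and \<Omega>h: "open \<Omega>h" "connected \<Omega>h" "bounded \<Omega>h" "polygonal \<Omega>h" "\<Omega>h \<subseteq> mesh_dom T0"
    and T: "T = {K \<in> T0. convex hull K \<inter> \<Omega>h \<noteq> {}}"
    and \<Gamma>: "\<forall>K \<in> Tb T \<Omega>h. convex hull K \<inter> frontier \<Omega>h = closed_segment (fst (\<Gamma> K)) (snd (\<Gamma> K))"
    and nh: "\<forall>K \<in> Tb T \<Omega>h. norm (nh K) = 1 \<and> nh K \<bullet> (snd (\<Gamma> K) - fst (\<Gamma> K)) = 0 \<and>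
              (\<forall>x \<in> open_segment (fst (\<Gamma> K)) (snd (\<Gamma> K)). \<exists>e>0. \<forall>s. 0 < s \<and> s < e \<longrightarrow>
                   x - s *\<^sub>R nh K \<in> \<Omega>h \<and> x + s *\<^sub>R nh K \<notin> \<Omega>h)"
    and f: "f measurable_on \<Omega>h" "(\<lambda>x. (f x)\<^sup>2) integrable_on \<Omega>h"
    and \<beta>\<gamma>: "\<beta> > 0" "\<gamma> > 0"
    and coercive: "\<forall>v \<in> CG T. v \<noteq> (\<lambda>_ _. 0) \<longrightarrow> a_h T Kp \<Omega>h \<Gamma> nh \<beta> \<gamma> v v > 0"
    and Kp: "\<forall>F \<in> interior_edges T. Kp F \<in> T \<and> F \<subseteq> Kp F"
    and mixed1: "uh \<in> DG T" "\<theta>h \<in> Mh T Kp"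
    and mixed2: "\<forall>w \<in> DG T. at_h T Kp \<Omega>h \<Gamma> nh \<beta> \<gamma> uh w + bform T Kp \<theta>h w = l_h T \<Omega>h \<Gamma> nh \<beta> f gh w"
    and mixed3: "\<forall>\<mu> \<in> Mh T Kp. bform T Kp \<mu> uh = 0"
    and thetaN: "\<forall>N \<in> nodes T.
        (if {F \<in> interior_edges T. N \<in> F} \<noteq> {} then
           \<theta> N \<in> Mh T Kp
           \<and> (\<forall>F \<in> interior_edges T. N \<notin> F \<longrightarrow> (\<forall>M. \<theta> N F M = 0))
           \<and> (\<forall>K \<in> T. N \<in> K \<longrightarrow>
                 bform T Kp (\<theta> N) (hatchi K N)
                   = l_h T \<Omega>h \<Gamma> nh \<beta> f gh (hatchi K N) - at_h T Kp \<Omega>h \<Gamma> nh \<beta> \<gamma> uh (hatchi K N)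
               \<and> (\<forall>M \<in> K. M \<noteq> N \<longrightarrow> bform T Kp (\<theta> N) (hatchi K M) = 0))
         else \<theta> N = (\<lambda>_ _. 0))"
  shows "\<forall>F M. \<theta>h F M = (\<Sum>N \<in> nodes T. \<theta> N F M)"
proof (intro allI)
  fix F M
  interpret oriented_mesh T Kp
    using conforming_subset[OF T0] T Kp by unfold_locales auto
  define r where "r = (\<lambda>w. l_h T \<Omega>h \<Gamma> nh \<beta> f gh w - at_h T Kp \<Omega>h \<Gamma> nh \<beta> \<gamma> uh w)"
  have "local_multiplier T Kp r N (\<theta> N)" if "N \<in> nodes T" for N
    using thetaN that unfolding local_multiplier_def r_def by simp
  moreover have "bform T Kp \<theta>h w = r w" if "w \<in> DG T" for w
    using mixed2 that unfolding r_def by (simp add: eq_diff_eq add.commute)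
  ultimately show "\<theta>h F M = (\<Sum>N \<in> nodes T. \<theta> N F M)"
    by (rule multiplier_eq_sum_local_multipliers[OF _ mixed1(2)])
qed

end
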